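(* Every well-typed $\lambda\mu\mathrm{T}$-term is strongly normalizing: if $\Gamma;\Delta\vdash t:\rho$, then there is no infinite reduction sequence $t\to t_1\to t_2\to\cdots$.
   Context: The calculus $\lambda\mu\mathrm{T}$. Types: $\rho,\sigma,\tau ::= \mathbb{N} \mid \sigma\to\tau$. Over infinite sets of $\lambda$-variables $x,y,\dots$ and $\mu$-variables $\alpha,\beta,\gamma,\dots$, terms and commands are mutually defined by $t,r,s ::= x \mid \lambda x{:}\rho.r \mid t\,s \mid \mu\alpha{:}\rho.c \mid 0 \mid \mathsf{S}\,t \mid \mathsf{nrec}_\rho\ r\ s\ t$ and $c ::= [\alpha]t$ (type annotations often omitted). $\lambda x$ binds $x$, $\mu\alpha$ binds $\alpha$; terms are considered modulo renaming of bound variables; $FV(t)$, $FCV(t)$ are the free $\lambda$- and $\mu$-variables. $t[x:=r]$ is capture-avoiding substitution. Numerals: $\underline{n} := \mathsf{S}^n 0$. Contexts: $E ::= \Box \mid E\,t \mid \mathsf{S}\,E \mid \mathsf{nrec}\ r\ s\ E$; $E[u]$ is the result of filling the hole with $u$. Structural substitution $t[\alpha:=\beta E]$ ($\beta$ a $\mu$-variable, $E$ a context) is defined homomorphically on all constructs (capture-avoiding for both kinds of variables) except $([\alpha]u)[\alpha:=\beta E] := [\beta]E[u[\alpha:=\beta E]]$ (and $([\gamma]u)[\alpha:=\beta E]:=[\gamma](u[\alpha:=\beta E])$ for $\gamma\neq\alpha$). Typing judgments $\Gamma;\Delta\vdash t:\rho$ and $\Gamma;\Delta\vdash c$ ($\Gamma$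 assigns types to $\lambda$-variables, $\Delta$ to $\mu$-variables) are generated by: (var) $x:\rho\in\Gamma \Rightarrow \Gamma;\Delta\vdash x:\rho$; (lambda) $\Gamma,x:\sigma;\Delta\vdash t:\tau \Rightarrow \Gamma;\Delta\vdash\lambda x{:}\sigma.t:\sigma\to\tau$; (app) $\Gamma;\Delta\vdash t:\sigma\to\tau$ and $\Gamma;\Delta\vdash s:\sigma$ $\Rightarrow \Gamma;\Delta\vdash ts:\tau$; (zero) $\Gamma;\Delta\vdash 0:\mathbb{N}$; (suc) $\Gamma;\Delta\vdash t:\mathbb{N}\Rightarrow\Gamma;\Delta\vdash \mathsf{S}\,t:\mathbb{N}$; (nrec) $\Gamma;\Delta\vdash r:\rho$, $\Gamma;\Delta\vdash s:\mathbb{N}\to\rho\to\rho$, $\Gamma;\Delta\vdash t:\mathbb{N}$ $\Rightarrow \Gamma;\Delta\vdash\mathsf{nrec}_\rho\ r\ s\ t:\rho$; (activate) $\Gamma;\Delta,\alpha:\rho\vdash c\Rightarrow\Gamma;\Delta\vdash\mu\alpha{:}\rho.c:\rho$; (passivate) $\Gamma;\Delta\vdash t:\rho$ and $\alpha:\rho\in\Delta$ $\Rightarrow \Gamma;\Delta\vdash[\alpha]t$. Reduction $\to$ is the compatible closure (on terms and commands) of: ($\beta$) $(\lambda x.t)r\to t[x:=r]$; ($\mu\mathsf{S}$) $\mathsf{S}(\mu\alpha.c)\to\mu\alpha.c[\alpha:=\alpha(\mathsf{S}\,\Box)]$; ($\mu R$) $(\mu\alpha.c)s\to\mu\alpha.c[\alpha:=\alpha(\Box\,s)]$;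 ($\mu\eta$) $\mu\alpha.[\alpha]t\to t$ if $\alpha\notin FCV(t)$; ($\mu i$) $[\alpha]\mu\beta.c\to c[\beta:=\alpha\,\Box]$; ($0$) $\mathsf{nrec}\ r\ s\ 0\to r$; ($\mathsf{S}$) $\mathsf{nrec}\ r\ s\ (\mathsf{S}\,\underline{n})\to s\ \underline{n}\ (\mathsf{nrec}\ r\ s\ \underline{n})$; ($\mu\mathbb{N}$) $\mathsf{nrec}\ r\ s\ (\mu\alpha.c)\to\mu\alpha.c[\alpha:=\alpha(\mathsf{nrec}\ r\ s\ \Box)]$. *)

theory Defs
  imports Main
begin

text \<open>The calculus lambda-mu-T, in de Bruijn representation (terms modulo
renaming of bound variables).  lambda-variables and mu-variables live in two
separate index spaces: Lam binds lambda-index 0, Mu binds mu-index 0.\<close>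

datatype ty = Nat | Arr ty ty

datatype trm =
    Var nat
  | Lam ty trm
  | App trm trm
  | Mu ty cmd
  | Zero
  | Sc trm
  | Nrec ty trm trm trm
and cmd = Pass nat trm

datatype ctx = Hole | CApp ctx trm | CSc ctx | CNrec ty trm trm ctx

fun num :: "nat \<Rightarrow> trm" where
  "num 0 = Zero"
| "num (Suc n) = Sc (num n)"

definition ext :: "(nat \<Rightarrow> nat) \<Rightarrow> nat \<Rightarrow> nat" where
  "ext f i = (case i of 0 \<Rightarrow> 0 | Suc j \<Rightarrow> Suc (f j))"

fun lren :: "(nat \<Rightarrow> nat) \<Rightarrow> trm \<Rightarrow> trm"
and lrenc :: "(nat \<Rightarrow> nat) \<Rightarrow> cmd \<Rightarrow> cmd" where
  "lren f (Var x) = Var (f x)"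
| "lren f (Lam T t) = Lam T (lren (ext f) t)"
| "lren f (App t s) = App (lren f t) (lren f s)"
| "lren f (Mu T c) = Mu T (lrenc f c)"
| "lren f Zero = Zero"
| "lren f (Sc t) = Sc (lren f t)"
| "lren f (Nrec T r s t) = Nrec T (lren f r) (lren f s) (lren f t)"
| "lrenc f (Pass a t) = Pass a (lren f t)"

fun mren :: "(nat \<Rightarrow> nat) \<Rightarrow> trm \<Rightarrow> trm"
and mrenc :: "(nat \<Rightarrow> nat) \<Rightarrow> cmd \<Rightarrow> cmd" where
  "mren f (Var x) = Var x"
| "mren f (Lam T t) = Lam T (mren f t)"
| "mren f (App t s) = App (mren f t) (mren f s)"
| "mren f (Mu T c) = Mu T (mrenc (ext f) c)"
| "mren f Zero = Zero"
| "mren f (Sc t) = Sc (mren f t)"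
| "mren f (Nrec T r s t) = Nrec T (mren f r) (mren f s) (mren f t)"
| "mrenc f (Pass a t) = Pass (f a) (mren f t)"

fun lren_ctx :: "(nat \<Rightarrow> nat) \<Rightarrow> ctx \<Rightarrow> ctx" where
  "lren_ctx f Hole = Hole"
| "lren_ctx f (CApp E t) = CApp (lren_ctx f E) (lren f t)"
| "lren_ctx f (CSc E) = CSc (lren_ctx f E)"
| "lren_ctx f (CNrec T r s E) = CNrec T (lren f r) (lren f s) (lren_ctx f E)"

fun mren_ctx :: "(nat \<Rightarrow> nat) \<Rightarrow> ctx \<Rightarrow> ctx" where
  "mren_ctx f Hole = Hole"
| "mren_ctx f (CApp E t) = CApp (mren_ctx f E) (mren f t)"
| "mren_ctx f (CSc E) = CSc (mren_ctx f E)"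
| "mren_ctx f (CNrec T r s E) = CNrec T (mren f r) (mren f s) (mren_ctx f E)"

fun fill :: "ctx \<Rightarrow> trm \<Rightarrow> trm" where
  "fill Hole u = u"
| "fill (CApp E t) u = App (fill E u) t"
| "fill (CSc E) u = Sc (fill E u)"
| "fill (CNrec T r s E) u = Nrec T r s (fill E u)"

fun lsubst :: "(nat \<Rightarrow> trm) \<Rightarrow> trm \<Rightarrow> trm"
and lsubstc :: "(nat \<Rightarrow> trm) \<Rightarrow> cmd \<Rightarrow> cmd" where
  "lsubst \<sigma> (Var x) = \<sigma> x"
| "lsubst \<sigma> (Lam T t) =
     Lam T (lsubst (\<lambda>i. case i of 0 \<Rightarrow> Var 0 | Suc j \<Rightarrow> lren Suc (\<sigma> j)) t)"
| "lsubst \<sigma> (App t s) = App (lsubst \<sigma> t) (lsubst \<sigma> s)"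
| "lsubst \<sigma> (Mu T c) = Mu T (lsubstc (\<lambda>i. mren Suc (\<sigma> i)) c)"
| "lsubst \<sigma> Zero = Zero"
| "lsubst \<sigma> (Sc t) = Sc (lsubst \<sigma> t)"
| "lsubst \<sigma> (Nrec T r s t) = Nrec T (lsubst \<sigma> r) (lsubst \<sigma> s) (lsubst \<sigma> t)"
| "lsubstc \<sigma> (Pass a t) = Pass a (lsubst \<sigma> t)"

text \<open>t[x:=r] for x the outermost bound index 0 (the binder is removed).\<close>
definition subst0 :: "trm \<Rightarrow> trm \<Rightarrow> trm" where
  "subst0 t r = lsubst (\<lambda>i. case i of 0 \<Rightarrow> r | Suc j \<Rightarrow> Var j) t"

text \<open>Structural substitution t[a := a E]: every command [a]u becomes
[a] E[u[a := a E]]; the mu-variable a itself is kept.  (The case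
c[b := a Hole] of rule (mu i) is a renaming of mu-variables, see below.)\<close>
fun ssub :: "nat \<Rightarrow> ctx \<Rightarrow> trm \<Rightarrow> trm"
and ssubc :: "nat \<Rightarrow> ctx \<Rightarrow> cmd \<Rightarrow> cmd" where
  "ssub a E (Var x) = Var x"
| "ssub a E (Lam T t) = Lam T (ssub a (lren_ctx Suc E) t)"
| "ssub a E (App t s) = App (ssub a E t) (ssub a E s)"
| "ssub a E (Mu T c) = Mu T (ssubc (Suc a) (mren_ctx Suc E) c)"
| "ssub a E Zero = Zero"
| "ssub a E (Sc t) = Sc (ssub a E t)"
| "ssub a E (Nrec T r s t) = Nrec T (ssub a E r) (ssub a E s) (ssub a E t)"
| "ssubc a E (Pass b u) =
     (if b = a then Pass b (fill E (ssub a E u)) else Pass b (ssub a E u))"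

fun FCV :: "trm \<Rightarrow> nat set"
and FCVc :: "cmd \<Rightarrow> nat set" where
  "FCV (Var x) = {}"
| "FCV (Lam T t) = FCV t"
| "FCV (App t s) = FCV t \<union> FCV s"
| "FCV (Mu T c) = {a. Suc a \<in> FCVc c}"
| "FCV Zero = {}"
| "FCV (Sc t) = FCV t"
| "FCV (Nrec T r s t) = FCV r \<union> FCV s \<union> FCV t"
| "FCVc (Pass a t) = insert a (FCV t)"

text \<open>Typing environments: functions from de Bruijn indices to types.\<close>
definition cons_env :: "ty \<Rightarrow> (nat \<Rightarrow> ty) \<Rightarrow> nat \<Rightarrow> ty" where
  "cons_env T \<Gamma> i = (case i of 0 \<Rightarrow> T | Suc j \<Rightarrow> \<Gamma> j)"

inductive typed :: "(nat \<Rightarrow> ty) \<Rightarrow> (nat \<Rightarrow> ty) \<Rightarrow> trm \<Rightarrow> ty \<Rightarrow> bool"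
and typedc :: "(nat \<Rightarrow> ty) \<Rightarrow> (nat \<Rightarrow> ty) \<Rightarrow> cmd \<Rightarrow> bool" where
  T_Var: "typed \<Gamma> \<Delta> (Var x) (\<Gamma> x)"
| T_Lam: "typed (cons_env S \<Gamma>) \<Delta> t T \<Longrightarrow> typed \<Gamma> \<Delta> (Lam S t) (Arr S T)"
| T_App: "typed \<Gamma> \<Delta> t (Arr S T) \<Longrightarrow> typed \<Gamma> \<Delta> s S \<Longrightarrow> typed \<Gamma> \<Delta> (App t s) T"
| T_Zero: "typed \<Gamma> \<Delta> Zero Nat"
| T_Sc: "typed \<Gamma> \<Delta> t Nat \<Longrightarrow> typed \<Gamma> \<Delta> (Sc t) Nat"
| T_Nrec: "typed \<Gamma> \<Delta> r R \<Longrightarrow> typed \<Gamma> \<Delta> s (Arr Nat (Arr R R)) \<Longrightarrow> typed \<Gamma> \<Delta> t Nat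
           \<Longrightarrow> typed \<Gamma> \<Delta> (Nrec R r s t) R"
| T_Mu: "typedc \<Gamma> (cons_env R \<Delta>) c \<Longrightarrow> typed \<Gamma> \<Delta> (Mu R c) R"
| T_Pass: "typed \<Gamma> \<Delta> t (\<Delta> a) \<Longrightarrow> typedc \<Gamma> \<Delta> (Pass a t)"

inductive red :: "trm \<Rightarrow> trm \<Rightarrow> bool"
and redc :: "cmd \<Rightarrow> cmd \<Rightarrow> bool" where
  r_beta: "red (App (Lam T t) r) (subst0 t r)"
| r_muS: "red (Sc (Mu T c)) (Mu T (ssubc 0 (CSc Hole) c))"
| r_muR: "red (App (Mu (Arr S T) c) s) (Mu T (ssubc 0 (CApp Hole (mren Suc s)) c))"
| r_mueta: "0 \<notin> FCV t \<Longrightarrow> red (Mu T (Pass 0 t)) (mren (\<lambda>i. i - 1) t)"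
| r_mui: "redc (Pass a (Mu T c)) (mrenc (\<lambda>i. case i of 0 \<Rightarrow> a | Suc j \<Rightarrow> j) c)"
| r_zero: "red (Nrec R r s Zero) r"
| r_suc: "red (Nrec R r s (Sc (num n))) (App (App s (num n)) (Nrec R r s (num n)))"
| r_muN: "red (Nrec R r s (Mu T c))
            (Mu R (ssubc 0 (CNrec R (mren Suc r) (mren Suc s) Hole) c))"
| c_Lam: "red t t' \<Longrightarrow> red (Lam T t) (Lam T t')"
| c_App1: "red t t' \<Longrightarrow> red (App t s) (App t' s)"
| c_App2: "red s s' \<Longrightarrow> red (App t s) (App t s')"
| c_Mu: "redc c c' \<Longrightarrow> red (Mu T c) (Mu T c')"
| c_Sc: "red t t' \<Longrightarrow> red (Sc t) (Sc t')"
| c_Nrec1: "red r r' \<Longrightarrow> red (Nrec R r s t) (Nrec R r' s t)"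
| c_Nrec2: "red s s' \<Longrightarrow> red (Nrec R r s t) (Nrec R r s' t)"
| c_Nrec3: "red t t' \<Longrightarrow> red (Nrec R r s t) (Nrec R r s t')"
| c_Pass: "red t t' \<Longrightarrow> redc (Pass a t) (Pass a t')"

end

theory Submission
  imports Defs
begin

(* The proof is a reducibility argument in which a type is interpreted by a set of
   continuations (evaluation contexts) and a term is reducible if it is strongly
   normalising in every continuation of its type; closing the interpretation under
   mu-renamings makes it stable under the (mu i) rule. *)

section \<open>Strong normalisation of abstract relations\<close>

abbreviation SN :: "('a \<Rightarrow> 'a \<Rightarrow> bool) \<Rightarrow> 'a \<Rightarrow> bool" where
  "SN r \<equiv> Wellfounded.accp (\<lambda>y x. r x y)"

lemma SN_intro: "(\<And>y. r x y \<Longrightarrow> SN r y) \<Longrightarrow> SN r x"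
  by (rule accp.accI) simp

lemma SN_step: "SN r x \<Longrightarrow> r x y \<Longrightarrow> SN r y"
  by (erule accp_downward) simp

lemma SN_steps: "r\<^sup>*\<^sup>* x y \<Longrightarrow> SN r x \<Longrightarrow> SN r y"
  by (induct rule: rtranclp_induct) (auto intro: SN_step)

lemma SN_trancl: "SN r x \<Longrightarrow> SN r\<^sup>+\<^sup>+ x"
proof (induct rule: accp.induct)
  case (accI x)
  show ?case
  proof (rule SN_intro)
    fix y assume "r\<^sup>+\<^sup>+ x y"
    then obtain w where "r x w" and "r\<^sup>*\<^sup>* w y" by (auto dest: tranclpD)
    moreover from \<open>r x w\<close> have "SN r\<^sup>+\<^sup>+ w" by (rule accI.hyps(2))
    ultimately show "SN r\<^sup>+\<^sup>+ y"
      by (auto dest: rtranclpD intro: SN_step)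
  qed
qed

lemma SN_induct [consumes 1, case_names step]:
  assumes "SN r x"
    and step: "\<And>x. SN r x \<Longrightarrow> (\<And>y. r\<^sup>+\<^sup>+ x y \<Longrightarrow> P y) \<Longrightarrow> P x"
  shows "P x"
proof -
  from \<open>SN r x\<close> have "SN r\<^sup>+\<^sup>+ x" by (rule SN_trancl)
  then have "SN r x \<longrightarrow> P x"
  proof (induct rule: accp.induct)
    case (accI x)
    show ?case
      using accI.hyps(2) by (auto intro: step SN_steps tranclp_into_rtranclp)
  qed
  with \<open>SN r x\<close> show ?thesis by blast
qed

lemma SN_simulation:
  assumes "SN s (g a)" and sim: "\<And>x y. r x y \<Longrightarrow> s\<^sup>+\<^sup>+ (g x) (g y)"
  shows "SN r a"
proof -
  have "\<forall>a. g a = X \<longrightarrow> SN r a" if "SN s X" for X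
    using that
  proof (induct rule: SN_induct)
    case (step X)
    show ?case
    proof (intro allI impI)
      fix a assume "g a = X"
      show "SN r a"
      proof (rule SN_intro)
        fix y assume "r a y"
        with sim \<open>g a = X\<close> have "s\<^sup>+\<^sup>+ X (g y)" by blast
        with step.hyps(2) show "SN r y" by blast
      qed
    qed
  qed
  with assms(1) show ?thesis by blast
qed

lemma SN_simulation1:
  "SN s (g a) \<Longrightarrow> (\<And>x y. r x y \<Longrightarrow> s (g x) (g y)) \<Longrightarrow> SN r a"
  by (erule SN_simulation) auto

lemma SN_reflection:
  assumes "SN r a" and reflect: "\<And>x y. s (g x) y \<Longrightarrow> \<exists>x'. r x x' \<and> y = g x'"
  shows "SN s (g a)"
  using assms(1)
proof (induct rule: accp.induct)
  case (accI x)
  show ?case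
    by (rule SN_intro) (use accI.hyps(2) reflect in fastforce)
qed

lemma SN_no_chain: "SN r x \<Longrightarrow> \<not> (\<exists>f. f 0 = x \<and> (\<forall>i. r (f i) (f (Suc i))))"
proof (induct rule: accp.induct)
  case (accI x)
  show ?case
  proof
    assume "\<exists>f. f 0 = x \<and> (\<forall>i. r (f i) (f (Suc i)))"
    then obtain f where "f 0 = x" and chain: "\<forall>i. r (f i) (f (Suc i))" by blast
    then have "r x (f 1)" by (metis One_nat_def)
    moreover have "\<exists>g. g 0 = f 1 \<and> (\<forall>i. r (g i) (g (Suc i)))"
      using chain by (intro exI[of _ "\<lambda>i. f (Suc i)"]) simp
    ultimately show False using accI.hyps(2) by blast
  qed
qed

lemma rtranclp_map:
  assumes "\<And>x y. r x y \<Longrightarrow> s\<^sup>*\<^sup>* (f x) (f y)"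
  shows "r\<^sup>*\<^sup>* x y \<Longrightarrow> s\<^sup>*\<^sup>* (f x) (f y)"
  by (induct rule: rtranclp_induct) (auto intro: rtranclp_trans assms)

section \<open>Renamings and evaluation contexts\<close>

lemma ext_simps [simp]: "ext f 0 = 0" "ext f (Suc j) = Suc (f j)"
  by (simp_all add: ext_def)

lemma ext_comp [simp]: "(\<lambda>a. ext f (ext g a)) = ext (\<lambda>a. f (g a))"
  by (rule ext) (simp add: ext_def split: nat.split)

lemma ext_ident [simp]: "ext (\<lambda>x. x) = (\<lambda>x. x)"
  by (rule ext) (simp add: ext_def split: nat.split)

lemma lren_comp [simp]:
  "lren f (lren g t) = lren (\<lambda>a. f (g a)) t"
  "lrenc f (lrenc g c) = lrenc (\<lambda>a. f (g a)) c"
  by (induct t and c arbitrary: f g and f g rule: trm.induct cmd.induct) simp_all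

lemma mren_comp [simp]:
  "mren f (mren g t) = mren (\<lambda>a. f (g a)) t"
  "mrenc f (mrenc g c) = mrenc (\<lambda>a. f (g a)) c"
  by (induct t and c arbitrary: f g and f g rule: trm.induct cmd.induct) simp_all

lemma lren_mren:
  "lren f (mren g t) = mren g (lren f t)"
  "lrenc f (mrenc g c) = mrenc g (lrenc f c)"
  by (induct t and c arbitrary: f g and f g rule: trm.induct cmd.induct) simp_all

lemma lren_ident [simp]: "lren (\<lambda>x. x) t = t" "lrenc (\<lambda>x. x) c = c"
  by (induct t and c rule: trm.induct cmd.induct) simp_all

lemma mren_ident [simp]: "mren (\<lambda>x. x) t = t" "mrenc (\<lambda>x. x) c = c"
  by (induct t and c rule: trm.induct cmd.induct) simp_all

lemma lren_ctx_comp [simp]: "lren_ctx f (lren_ctx g E) = lren_ctx (\<lambda>a. f (g a)) E"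
  by (induct E) simp_all

lemma mren_ctx_comp [simp]: "mren_ctx f (mren_ctx g E) = mren_ctx (\<lambda>a. f (g a)) E"
  by (induct E) simp_all

lemma mren_ctx_ident [simp]: "mren_ctx (\<lambda>x. x) E = E"
  by (induct E) simp_all

lemma lren_mren_ctx: "lren_ctx f (mren_ctx g E) = mren_ctx g (lren_ctx f E)"
  by (induct E) (simp_all add: lren_mren)

lemma lren_fill [simp]: "lren f (fill E u) = fill (lren_ctx f E) (lren f u)"
  by (induct E) simp_all

lemma mren_fill [simp]: "mren f (fill E u) = fill (mren_ctx f E) (mren f u)"
  by (induct E) simp_all

fun comp_ctx :: "ctx \<Rightarrow> ctx \<Rightarrow> ctx" where
  "comp_ctx Hole F = F"
| "comp_ctx (CApp E t) F = CApp (comp_ctx E F) t"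
| "comp_ctx (CSc E) F = CSc (comp_ctx E F)"
| "comp_ctx (CNrec T r s E) F = CNrec T r s (comp_ctx E F)"

lemma comp_ctx_Hole [simp]: "comp_ctx E Hole = E"
  by (induct E) simp_all

lemma fill_comp_ctx [simp]: "fill (comp_ctx E F) u = fill E (fill F u)"
  by (induct E) simp_all

lemma comp_ctx_assoc [simp]: "comp_ctx (comp_ctx E F) G = comp_ctx E (comp_ctx F G)"
  by (induct E) simp_all

lemma lren_comp_ctx [simp]: "lren_ctx f (comp_ctx E F) = comp_ctx (lren_ctx f E) (lren_ctx f F)"
  by (induct E) simp_all

lemma mren_comp_ctx [simp]: "mren_ctx f (comp_ctx E F) = comp_ctx (mren_ctx f E) (mren_ctx f F)"
  by (induct E) simp_all

definition frame :: "ctx \<Rightarrow> bool" where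
  "frame F \<longleftrightarrow> (\<exists>s. F = CApp Hole s) \<or> F = CSc Hole \<or> (\<exists>R r s. F = CNrec R r s Hole)"

lemma ctx_frame_induct [case_names Hole frame]:
  assumes "P Hole" and "\<And>G E. frame G \<Longrightarrow> P E \<Longrightarrow> P (comp_ctx G E)"
  shows "P E"
proof (induct E)
  case (CApp E t)
  then show ?case using assms(2)[of "CApp Hole t" E] by (simp add: frame_def)
next
  case (CSc E)
  then show ?case using assms(2)[of "CSc Hole" E] by (simp add: frame_def)
next
  case (CNrec R r s E)
  then show ?case using assms(2)[of "CNrec R r s Hole" E] by (simp add: frame_def)
qed (rule assms(1))

lemma frame_cases [consumes 1, case_names App Sc Nrec]:
  "frame G \<Longrightarrow> (\<And>s. G = CApp Hole s \<Longrightarrow> P) \<Longrightarrow> (G = CSc Hole \<Longrightarrow> P)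
   \<Longrightarrow> (\<And>R r s. G = CNrec R r s Hole \<Longrightarrow> P) \<Longrightarrow> P"
  unfolding frame_def by blast

section \<open>A generalised simultaneous substitution\<close>

text \<open>All operations on terms used by reduction are instances of one substitution
  \<open>gsub \<sigma> \<theta>\<close>: the lambda-substitution \<open>\<sigma>\<close> replaces each lambda-variable
  by a term, and the mu-substitution \<open>\<theta>\<close> maps each mu-variable \<open>b\<close> to a pair
  \<open>(b', E)\<close>, replacing every command \<open>[b]u\<close> by \<open>[b'] E[u]\<close>.
  Renamings, \<open>subst0\<close> and structural substitution \<open>ssub\<close> are special
  cases; the composition law \<open>gsub_gsub\<close> below then yields all commutation
  properties needed for reduction at once.\<close>

definition lift_lsub :: "(nat \<Rightarrow> trm) \<Rightarrow> nat \<Rightarrow> trm" where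
  "lift_lsub \<sigma> i = (case i of 0 \<Rightarrow> Var 0 | Suc j \<Rightarrow> lren Suc (\<sigma> j))"

definition lift_msub :: "(nat \<Rightarrow> nat \<times> ctx) \<Rightarrow> nat \<Rightarrow> nat \<times> ctx" where
  "lift_msub \<theta> b = (case b of 0 \<Rightarrow> (0, Hole)
     | Suc j \<Rightarrow> (Suc (fst (\<theta> j)), mren_ctx Suc (snd (\<theta> j))))"

definition msub_lren :: "(nat \<Rightarrow> nat) \<Rightarrow> (nat \<Rightarrow> nat \<times> ctx) \<Rightarrow> nat \<Rightarrow> nat \<times> ctx" where
  "msub_lren f \<theta> b = (fst (\<theta> b), lren_ctx f (snd (\<theta> b)))"

definition msub_mren :: "(nat \<Rightarrow> nat) \<Rightarrow> (nat \<Rightarrow> nat \<times> ctx) \<Rightarrow> nat \<Rightarrow> nat \<times> ctx" where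
  "msub_mren f \<theta> b = (f (fst (\<theta> b)), mren_ctx f (snd (\<theta> b)))"

lemma lift_lsub_simps [simp]: "lift_lsub \<sigma> 0 = Var 0" "lift_lsub \<sigma> (Suc j) = lren Suc (\<sigma> j)"
  by (simp_all add: lift_lsub_def)

lemma lift_msub_simps [simp]:
  "lift_msub \<theta> 0 = (0, Hole)"
  "lift_msub \<theta> (Suc j) = (Suc (fst (\<theta> j)), mren_ctx Suc (snd (\<theta> j)))"
  by (simp_all add: lift_msub_def)

lemma msub_lren_simps [simp]:
  "fst (msub_lren f \<theta> b) = fst (\<theta> b)" "snd (msub_lren f \<theta> b) = lren_ctx f (snd (\<theta> b))"
  by (simp_all add: msub_lren_def)

lemma msub_mren_simps [simp]:
  "fst (msub_mren f \<theta> b) = f (fst (\<theta> b))" "snd (msub_mren f \<theta> b) = mren_ctx f (snd (\<theta> b))"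
  by (simp_all add: msub_mren_def)

fun gsub :: "(nat \<Rightarrow> trm) \<Rightarrow> (nat \<Rightarrow> nat \<times> ctx) \<Rightarrow> trm \<Rightarrow> trm"
and gsubc :: "(nat \<Rightarrow> trm) \<Rightarrow> (nat \<Rightarrow> nat \<times> ctx) \<Rightarrow> cmd \<Rightarrow> cmd" where
  "gsub \<sigma> \<theta> (Var x) = \<sigma> x"
| "gsub \<sigma> \<theta> (Lam T t) = Lam T (gsub (lift_lsub \<sigma>) (msub_lren Suc \<theta>) t)"
| "gsub \<sigma> \<theta> (App t s) = App (gsub \<sigma> \<theta> t) (gsub \<sigma> \<theta> s)"
| "gsub \<sigma> \<theta> (Mu T c) = Mu T (gsubc (\<lambda>i. mren Suc (\<sigma> i)) (lift_msub \<theta>) c)"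
| "gsub \<sigma> \<theta> Zero = Zero"
| "gsub \<sigma> \<theta> (Sc t) = Sc (gsub \<sigma> \<theta> t)"
| "gsub \<sigma> \<theta> (Nrec T r s t) = Nrec T (gsub \<sigma> \<theta> r) (gsub \<sigma> \<theta> s) (gsub \<sigma> \<theta> t)"
| "gsubc \<sigma> \<theta> (Pass a t) = Pass (fst (\<theta> a)) (fill (snd (\<theta> a)) (gsub \<sigma> \<theta> t))"

fun gsub_ctx :: "(nat \<Rightarrow> trm) \<Rightarrow> (nat \<Rightarrow> nat \<times> ctx) \<Rightarrow> ctx \<Rightarrow> ctx" where
  "gsub_ctx \<sigma> \<theta> Hole = Hole"
| "gsub_ctx \<sigma> \<theta> (CApp E t) = CApp (gsub_ctx \<sigma> \<theta> E) (gsub \<sigma> \<theta> t)"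
| "gsub_ctx \<sigma> \<theta> (CSc E) = CSc (gsub_ctx \<sigma> \<theta> E)"
| "gsub_ctx \<sigma> \<theta> (CNrec T r s E) = CNrec T (gsub \<sigma> \<theta> r) (gsub \<sigma> \<theta> s) (gsub_ctx \<sigma> \<theta> E)"

lemma gsub_fill [simp]: "gsub \<sigma> \<theta> (fill E u) = fill (gsub_ctx \<sigma> \<theta> E) (gsub \<sigma> \<theta> u)"
  by (induct E) simp_all

lemma gsub_comp_ctx [simp]:
  "gsub_ctx \<sigma> \<theta> (comp_ctx E F) = comp_ctx (gsub_ctx \<sigma> \<theta> E) (gsub_ctx \<sigma> \<theta> F)"
  by (induct E) simp_all

lemma lift_lsub_ext [simp]: "(\<lambda>a. lift_lsub \<sigma> (ext f a)) = lift_lsub (\<lambda>a. \<sigma> (f a))"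
  by (rule ext) (simp add: lift_lsub_def ext_def split: nat.split)

lemma lift_msub_ext [simp]: "(\<lambda>a. lift_msub \<theta> (ext f a)) = lift_msub (\<lambda>a. \<theta> (f a))"
  by (rule ext) (simp add: lift_msub_def ext_def split: nat.split)

text \<open>Not a simplification rule: read modulo eta-conversion it would rewrite
  \<open>msub_lren g \<theta>\<close> to itself.\<close>

lemma msub_lren_comp: "(\<lambda>a. msub_lren g \<theta> (f a)) = msub_lren g (\<lambda>a. \<theta> (f a))"
  by (rule ext) (simp add: msub_lren_def)

lemma lren_lift_lsub [simp]: "(\<lambda>a. lren (ext f) (lift_lsub \<sigma> a)) = lift_lsub (\<lambda>a. lren f (\<sigma> a))"
  by (rule ext) (simp add: lift_lsub_def split: nat.split)

lemma mren_lift_lsub [simp]: "(\<lambda>a. mren f (lift_lsub \<sigma> a)) = lift_lsub (\<lambda>a. mren f (\<sigma> a))"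
  by (rule ext) (simp add: lift_lsub_def lren_mren split: nat.split)

lemma msub_lren_lift_msub [simp]:
  "msub_lren f (lift_msub \<theta>) = lift_msub (msub_lren f \<theta>)"
proof
  show "msub_lren f (lift_msub \<theta>) b = lift_msub (msub_lren f \<theta>) b" for b
    by (cases b) (simp_all add: msub_lren_def lren_mren_ctx)
qed

lemma msub_lren_msub_lren [simp]: "msub_lren f (msub_lren g \<theta>) = msub_lren (\<lambda>a. f (g a)) \<theta>"
  by (rule ext) (simp add: msub_lren_def)

lemma msub_mren_lift_msub [simp]:
  "msub_mren (ext f) (lift_msub \<theta>) = lift_msub (msub_mren f \<theta>)"
proof
  show "msub_mren (ext f) (lift_msub \<theta>) b = lift_msub (msub_mren f \<theta>) b" for b
    by (cases b) (simp_all add: msub_mren_def)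
qed

lemma msub_mren_msub_lren [simp]: "msub_mren f (msub_lren g \<theta>) = msub_lren g (msub_mren f \<theta>)"
  by (rule ext) (simp add: msub_lren_def msub_mren_def lren_mren_ctx)

lemma gsub_lren:
  "gsub \<sigma> \<theta> (lren f t) = gsub (\<lambda>a. \<sigma> (f a)) \<theta> t"
  "gsubc \<sigma> \<theta> (lrenc f c) = gsubc (\<lambda>a. \<sigma> (f a)) \<theta> c"
  by (induct t and c arbitrary: \<sigma> \<theta> f and \<sigma> \<theta> f rule: trm.induct cmd.induct) simp_all

lemma lren_gsub:
  "lren f (gsub \<sigma> \<theta> t) = gsub (\<lambda>a. lren f (\<sigma> a)) (msub_lren f \<theta>) t"
  "lrenc f (gsubc \<sigma> \<theta> c) = gsubc (\<lambda>a. lren f (\<sigma> a)) (msub_lren f \<theta>) c"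
  by (induct t and c arbitrary: \<sigma> \<theta> f and \<sigma> \<theta> f rule: trm.induct cmd.induct)
    (simp_all add: lren_mren)

lemma gsub_mren:
  "gsub \<sigma> \<theta> (mren f t) = gsub \<sigma> (\<lambda>a. \<theta> (f a)) t"
  "gsubc \<sigma> \<theta> (mrenc f c) = gsubc \<sigma> (\<lambda>a. \<theta> (f a)) c"
proof (induct t and c arbitrary: \<sigma> \<theta> f and \<sigma> \<theta> f rule: trm.induct cmd.induct)
  case (Lam T t)
  then show ?case by (simp add: msub_lren_comp[of Suc \<theta> f])
qed simp_all

lemma mren_gsub:
  "mren f (gsub \<sigma> \<theta> t) = gsub (\<lambda>a. mren f (\<sigma> a)) (msub_mren f \<theta>) t"
  "mrenc f (gsubc \<sigma> \<theta> c) = gsubc (\<lambda>a. mren f (\<sigma> a)) (msub_mren f \<theta>) c"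
  by (induct t and c arbitrary: \<sigma> \<theta> f and \<sigma> \<theta> f rule: trm.induct cmd.induct)
    (simp_all add: lren_mren)

lemma gsub_ctx_lren: "gsub_ctx \<sigma> \<theta> (lren_ctx f E) = gsub_ctx (\<lambda>a. \<sigma> (f a)) \<theta> E"
  by (induct E) (simp_all add: gsub_lren)

lemma lren_gsub_ctx:
  "lren_ctx f (gsub_ctx \<sigma> \<theta> E) = gsub_ctx (\<lambda>a. lren f (\<sigma> a)) (msub_lren f \<theta>) E"
  by (induct E) (simp_all add: lren_gsub)

lemma gsub_ctx_mren: "gsub_ctx \<sigma> \<theta> (mren_ctx f E) = gsub_ctx \<sigma> (\<lambda>a. \<theta> (f a)) E"
  by (induct E) (simp_all add: gsub_mren)

lemma mren_gsub_ctx: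
  "mren_ctx f (gsub_ctx \<sigma> \<theta> E) = gsub_ctx (\<lambda>a. mren f (\<sigma> a)) (msub_mren f \<theta>) E"
  by (induct E) (simp_all add: mren_gsub)

lemma lift_msub_Suc: "(\<lambda>a. lift_msub \<theta> (Suc a)) = msub_mren Suc \<theta>"
  by (rule ext) (simp add: msub_mren_def)

lemma gsub_lren_Suc:
  "gsub (lift_lsub \<sigma>) (msub_lren Suc \<theta>) (lren Suc t) = lren Suc (gsub \<sigma> \<theta> t)"
  by (simp add: gsub_lren lren_gsub)

lemma gsub_ctx_lren_Suc:
  "gsub_ctx (lift_lsub \<sigma>) (msub_lren Suc \<theta>) (lren_ctx Suc E) = lren_ctx Suc (gsub_ctx \<sigma> \<theta> E)"
  by (simp add: gsub_ctx_lren lren_gsub_ctx)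

lemma gsub_mren_Suc:
  "gsub (\<lambda>i. mren Suc (\<sigma> i)) (lift_msub \<theta>) (mren Suc t) = mren Suc (gsub \<sigma> \<theta> t)"
  by (simp only: gsub_mren lift_msub_Suc mren_gsub)

lemma gsub_ctx_mren_Suc:
  "gsub_ctx (\<lambda>i. mren Suc (\<sigma> i)) (lift_msub \<theta>) (mren_ctx Suc E) = mren_ctx Suc (gsub_ctx \<sigma> \<theta> E)"
  by (simp only: gsub_ctx_mren lift_msub_Suc mren_gsub_ctx)

text \<open>The mu-substitution performing \<open>\<theta>1\<close> followed by \<open>gsub \<sigma>2 \<theta>2\<close>:
  a command \<open>[b]u\<close> first becomes \<open>[b1] E1[u]\<close> and then
  \<open>[b2] E2[E1'[u']]\<close>, where \<open>\<theta>2 b1 = (b2, E2)\<close>.\<close>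

definition msub_comp ::
  "(nat \<Rightarrow> trm) \<Rightarrow> (nat \<Rightarrow> nat \<times> ctx) \<Rightarrow> (nat \<Rightarrow> nat \<times> ctx) \<Rightarrow> nat \<Rightarrow> nat \<times> ctx" where
  "msub_comp \<sigma>2 \<theta>2 \<theta>1 b =
     (fst (\<theta>2 (fst (\<theta>1 b))), comp_ctx (snd (\<theta>2 (fst (\<theta>1 b)))) (gsub_ctx \<sigma>2 \<theta>2 (snd (\<theta>1 b))))"

lemma msub_comp_simps [simp]:
  "fst (msub_comp \<sigma>2 \<theta>2 \<theta>1 b) = fst (\<theta>2 (fst (\<theta>1 b)))"
  "snd (msub_comp \<sigma>2 \<theta>2 \<theta>1 b) = comp_ctx (snd (\<theta>2 (fst (\<theta>1 b)))) (gsub_ctx \<sigma>2 \<theta>2 (snd (\<theta>1 b)))"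
  by (simp_all add: msub_comp_def)

lemma lift_lsub_gsub [simp]:
  "(\<lambda>a. gsub (lift_lsub \<sigma>2) (msub_lren Suc \<theta>2) (lift_lsub \<sigma>1 a))
   = lift_lsub (\<lambda>a. gsub \<sigma>2 \<theta>2 (\<sigma>1 a))"
proof
  show "gsub (lift_lsub \<sigma>2) (msub_lren Suc \<theta>2) (lift_lsub \<sigma>1 i)
        = lift_lsub (\<lambda>a. gsub \<sigma>2 \<theta>2 (\<sigma>1 a)) i" for i
    by (cases i) (simp_all add: gsub_lren_Suc)
qed

lemma msub_comp_lren [simp]:
  "msub_comp (lift_lsub \<sigma>2) (msub_lren Suc \<theta>2) (msub_lren Suc \<theta>1)
   = msub_lren Suc (msub_comp \<sigma>2 \<theta>2 \<theta>1)"
  by (rule ext) (simp add: prod_eq_iff gsub_ctx_lren_Suc)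

lemma mren_Suc_gsub [simp]:
  "(\<lambda>a. gsub (\<lambda>i. mren Suc (\<sigma>2 i)) (lift_msub \<theta>2) (mren Suc (\<sigma>1 a)))
   = (\<lambda>a. mren Suc (gsub \<sigma>2 \<theta>2 (\<sigma>1 a)))"
  by (rule ext) (simp add: gsub_mren_Suc)

lemma msub_comp_lift [simp]:
  "msub_comp (\<lambda>i. mren Suc (\<sigma>2 i)) (lift_msub \<theta>2) (lift_msub \<theta>1) = lift_msub (msub_comp \<sigma>2 \<theta>2 \<theta>1)"
proof
  show "msub_comp (\<lambda>i. mren Suc (\<sigma>2 i)) (lift_msub \<theta>2) (lift_msub \<theta>1) b
        = lift_msub (msub_comp \<sigma>2 \<theta>2 \<theta>1) b" for b
    by (cases b) (simp_all add: msub_comp_def gsub_ctx_mren_Suc)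
qed

lemma gsub_gsub:
  "gsub \<sigma>2 \<theta>2 (gsub \<sigma>1 \<theta>1 t) = gsub (\<lambda>a. gsub \<sigma>2 \<theta>2 (\<sigma>1 a)) (msub_comp \<sigma>2 \<theta>2 \<theta>1) t"
  "gsubc \<sigma>2 \<theta>2 (gsubc \<sigma>1 \<theta>1 c) = gsubc (\<lambda>a. gsub \<sigma>2 \<theta>2 (\<sigma>1 a)) (msub_comp \<sigma>2 \<theta>2 \<theta>1) c"
  by (induct t and c arbitrary: \<sigma>1 \<theta>1 \<sigma>2 \<theta>2 and \<sigma>1 \<theta>1 \<sigma>2 \<theta>2 rule: trm.induct cmd.induct)
    simp_all

definition msub_id :: "nat \<Rightarrow> nat \<times> ctx" where
  "msub_id b = (b, Hole)"

definition msub_ren :: "(nat \<Rightarrow> nat) \<Rightarrow> nat \<Rightarrow> nat \<times> ctx" where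
  "msub_ren f b = (f b, Hole)"

definition msub_struct :: "nat \<Rightarrow> ctx \<Rightarrow> nat \<Rightarrow> nat \<times> ctx" where
  "msub_struct a E b = (b, if b = a then E else Hole)"

definition lsub0 :: "trm \<Rightarrow> nat \<Rightarrow> trm" where
  "lsub0 r i = (case i of 0 \<Rightarrow> r | Suc j \<Rightarrow> Var j)"

lemma msub_id_simps [simp]: "fst (msub_id b) = b" "snd (msub_id b) = Hole"
  by (simp_all add: msub_id_def)

lemma msub_ren_simps [simp]: "fst (msub_ren f b) = f b" "snd (msub_ren f b) = Hole"
  by (simp_all add: msub_ren_def)

lemma msub_struct_simps [simp]:
  "fst (msub_struct a E b) = b" "snd (msub_struct a E b) = (if b = a then E else Hole)"
  by (simp_all add: msub_struct_def)

lemma lsub0_simps [simp]: "lsub0 r 0 = r" "lsub0 r (Suc j) = Var j"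
  by (simp_all add: lsub0_def)

lemma lift_lsub_Var_comp [simp]: "lift_lsub (\<lambda>a. Var (f a)) = (\<lambda>a. Var (ext f a))"
  by (rule ext) (simp add: lift_lsub_def split: nat.split)

lemma msub_lren_msub_id [simp]: "msub_lren f msub_id = msub_id"
  by (rule ext) (simp add: prod_eq_iff)

lemma lift_msub_id [simp]: "lift_msub msub_id = msub_id"
  by (rule ext) (simp add: lift_msub_def msub_id_def split: nat.split)

lemma msub_lren_msub_ren [simp]: "msub_lren g (msub_ren f) = msub_ren f"
  by (rule ext) (simp add: prod_eq_iff)

lemma lift_msub_ren [simp]: "lift_msub (msub_ren f) = msub_ren (ext f)"
  by (rule ext) (simp add: lift_msub_def msub_ren_def split: nat.split)

lemma msub_lren_struct [simp]: "msub_lren f (msub_struct a E) = msub_struct a (lren_ctx f E)"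
  by (rule ext) (simp add: prod_eq_iff)

lemma lift_msub_struct [simp]: "lift_msub (msub_struct a E) = msub_struct (Suc a) (mren_ctx Suc E)"
  by (rule ext) (simp add: lift_msub_def msub_struct_def split: nat.split)

lemma gsub_ident [simp]: "gsub Var msub_id t = t" "gsubc Var msub_id c = c"
  by (induct t and c rule: trm.induct cmd.induct) simp_all

lemma gsub_ctx_ident [simp]: "gsub_ctx Var msub_id E = E"
  by (induct E) simp_all

lemma lsubst_as_gsub: "lsubst \<sigma> t = gsub \<sigma> msub_id t" "lsubstc \<sigma> c = gsubc \<sigma> msub_id c"
proof (induct t and c arbitrary: \<sigma> and \<sigma> rule: trm.induct cmd.induct)
  case (Lam T t)
  then show ?case by (simp add: lift_lsub_def[abs_def])
qed simp_all

lemma subst0_as_gsub: "subst0 t r = gsub (lsub0 r) msub_id t"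
  by (simp add: subst0_def lsubst_as_gsub lsub0_def[abs_def])

lemma lren_as_gsub:
  "lren f t = gsub (\<lambda>a. Var (f a)) msub_id t" "lrenc f c = gsubc (\<lambda>a. Var (f a)) msub_id c"
  by (induct t and c arbitrary: f and f rule: trm.induct cmd.induct) simp_all

lemma lren_ctx_as_gsub: "lren_ctx f E = gsub_ctx (\<lambda>a. Var (f a)) msub_id E"
  by (induct E) (simp_all add: lren_as_gsub)

lemma mren_as_gsub: "mren f t = gsub Var (msub_ren f) t" "mrenc f c = gsubc Var (msub_ren f) c"
  by (induct t and c arbitrary: f and f rule: trm.induct cmd.induct) simp_all

lemma mren_ctx_as_gsub: "mren_ctx f E = gsub_ctx Var (msub_ren f) E"
  by (induct E) (simp_all add: mren_as_gsub)

lemma ssub_as_gsub: "ssub a E t = gsub Var (msub_struct a E) t" "ssubc a E c = gsubc Var (msub_struct a E) c"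
  by (induct t and c arbitrary: a E and a E rule: trm.induct cmd.induct) simp_all

section \<open>An auxiliary reduction relation\<close>

text \<open>\<open>rd\<close> agrees with \<open>red\<close> up to two inessential changes that make it
  closed under substitution: rule (muR) ignores the type annotations of the
  mu-abstractions, and rule (mu eta) is stated for a body that is literally a
  weakening, instead of using the side condition on \<open>FCV\<close>.  Since
  \<open>red\<close> is contained in \<open>rd\<close>, strong normalisation for \<open>rd\<close>
  implies strong normalisation for \<open>red\<close>.\<close>

inductive rd :: "trm \<Rightarrow> trm \<Rightarrow> bool" and rdc :: "cmd \<Rightarrow> cmd \<Rightarrow> bool" where
  rd_beta: "rd (App (Lam T t) r) (subst0 t r)"
| rd_muS: "rd (Sc (Mu T c)) (Mu T (ssubc 0 (CSc Hole) c))"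
| rd_muR: "rd (App (Mu A c) s) (Mu B (ssubc 0 (CApp Hole (mren Suc s)) c))"
| rd_mueta: "rd (Mu T (Pass 0 (mren Suc u))) u"
| rd_mui: "rdc (Pass a (Mu T c)) (mrenc (\<lambda>i. case i of 0 \<Rightarrow> a | Suc j \<Rightarrow> j) c)"
| rd_zero: "rd (Nrec R r s Zero) r"
| rd_suc: "rd (Nrec R r s (Sc (num n))) (App (App s (num n)) (Nrec R r s (num n)))"
| rd_muN: "rd (Nrec R r s (Mu T c)) (Mu R (ssubc 0 (CNrec R (mren Suc r) (mren Suc s) Hole) c))"
| rd_Lam: "rd t t' \<Longrightarrow> rd (Lam T t) (Lam T t')"
| rd_App1: "rd t t' \<Longrightarrow> rd (App t s) (App t' s)"
| rd_App2: "rd s s' \<Longrightarrow> rd (App t s) (App t s')"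
| rd_Mu: "rdc c c' \<Longrightarrow> rd (Mu T c) (Mu T c')"
| rd_Sc: "rd t t' \<Longrightarrow> rd (Sc t) (Sc t')"
| rd_Nrec1: "rd r r' \<Longrightarrow> rd (Nrec R r s t) (Nrec R r' s t)"
| rd_Nrec2: "rd s s' \<Longrightarrow> rd (Nrec R r s t) (Nrec R r s' t)"
| rd_Nrec3: "rd t t' \<Longrightarrow> rd (Nrec R r s t) (Nrec R r s t')"
| rd_Pass: "rd t t' \<Longrightarrow> rdc (Pass a t) (Pass a t')"

abbreviation rds :: "trm \<Rightarrow> trm \<Rightarrow> bool" where "rds \<equiv> rd\<^sup>*\<^sup>*"
abbreviation rdp :: "trm \<Rightarrow> trm \<Rightarrow> bool" where "rdp \<equiv> rd\<^sup>+\<^sup>+"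
abbreviation rdcs :: "cmd \<Rightarrow> cmd \<Rightarrow> bool" where "rdcs \<equiv> rdc\<^sup>*\<^sup>*"
abbreviation rdcp :: "cmd \<Rightarrow> cmd \<Rightarrow> bool" where "rdcp \<equiv> rdc\<^sup>+\<^sup>+"

lemma mren_cong_FCV:
  "(\<forall>a\<in>FCV t. f a = g a) \<Longrightarrow> mren f t = mren g t"
  "(\<forall>a\<in>FCVc c. f a = g a) \<Longrightarrow> mrenc f c = mrenc g c"
proof (induct t and c arbitrary: f g and f g rule: trm.induct cmd.induct)
  case (Mu T c)
  have "\<forall>a\<in>FCVc c. ext f a = ext g a"
  proof
    fix a assume "a \<in> FCVc c"
    then show "ext f a = ext g a" using Mu.prems by (cases a) auto
  qed
  then show ?case using Mu.hyps by simp
qed auto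

lemma FCV_unshift: "0 \<notin> FCV t \<Longrightarrow> mren Suc (mren (\<lambda>i. i - 1) t) = t"
proof -
  assume "0 \<notin> FCV t"
  then have "mren (\<lambda>a. Suc (a - 1)) t = mren (\<lambda>x. x) t"
    by (intro mren_cong_FCV(1) ballI) (case_tac a, auto)
  then show ?thesis by simp
qed

lemma red_rd: "red t t' \<Longrightarrow> rd t t'" "redc c c' \<Longrightarrow> rdc c c'"
proof (induct rule: red_redc.inducts)
  case (r_mueta t T)
  then have "mren Suc (mren (\<lambda>i. i - 1) t) = t" by (rule FCV_unshift)
  then show ?case using rd_mueta[of T "mren (\<lambda>i. i - 1) t"] by simp
qed (auto intro: rd_rdc.intros)

lemma rd_in_ctx: "rd u u' \<Longrightarrow> rd (fill E u) (fill E u')"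
  by (induct E) (auto intro: rd_rdc.intros)

lemma rdp_cong:
  "rdp t t' \<Longrightarrow> rdp (Lam T t) (Lam T t')"
  "rdp t t' \<Longrightarrow> rdp (App t s) (App t' s)"
  "rdp s s' \<Longrightarrow> rdp (App t s) (App t s')"
  "rdcp c c' \<Longrightarrow> rdp (Mu T c) (Mu T c')"
  "rdp t t' \<Longrightarrow> rdp (Sc t) (Sc t')"
  "rdp r r' \<Longrightarrow> rdp (Nrec R r s t) (Nrec R r' s t)"
  "rdp s s' \<Longrightarrow> rdp (Nrec R r s t) (Nrec R r s' t)"
  "rdp t t' \<Longrightarrow> rdp (Nrec R r s t) (Nrec R r s t')"
  "rdp t t' \<Longrightarrow> rdcp (Pass a t) (Pass a t')"
  "rdp t t' \<Longrightarrow> rdp (fill E t) (fill E t')"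
  by - (erule tranclp_induct; auto intro: rd_rdc.intros rd_in_ctx tranclp.trancl_into_trancl)+

lemma rds_cong:
  "rds t t' \<Longrightarrow> rds (Lam T t) (Lam T t')"
  "rds t t' \<Longrightarrow> rds (App t s) (App t' s)"
  "rds s s' \<Longrightarrow> rds (App t s) (App t s')"
  "rdcs c c' \<Longrightarrow> rds (Mu T c) (Mu T c')"
  "rds t t' \<Longrightarrow> rds (Sc t) (Sc t')"
  "rds r r' \<Longrightarrow> rds (Nrec R r s t) (Nrec R r' s t)"
  "rds s s' \<Longrightarrow> rds (Nrec R r s t) (Nrec R r s' t)"
  "rds t t' \<Longrightarrow> rds (Nrec R r s t) (Nrec R r s t')"
  "rds t t' \<Longrightarrow> rdcs (Pass a t) (Pass a t')"
  "rds t t' \<Longrightarrow> rds (fill E t) (fill E t')"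
  by - (erule rtranclp_induct; auto intro: rd_rdc.intros rd_in_ctx rtranclp.rtrancl_into_rtrancl)+

lemma gsub_num [simp]: "gsub \<sigma> \<theta> (num n) = num n"
  by (induct n) simp_all

lemma mren_num [simp]: "mren f (num n) = num n"
  by (induct n) simp_all

lemma num_neq [simp]:
  "num n \<noteq> Mu T c" "num n \<noteq> Lam T t" "num n \<noteq> App a b" "num n \<noteq> Var x" "num n \<noteq> Nrec R r s t"
  "Mu T c \<noteq> num n" "Lam T t \<noteq> num n" "App a b \<noteq> num n" "Var x \<noteq> num n" "Nrec R r s t \<noteq> num n"
  by (cases n; simp)+

lemma num_normal: "\<not> rd (num n) v"
proof (induct n arbitrary: v)
  case 0
  show ?case by (auto elim: rd.cases)
next
  case (Suc n)
  show ?case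
  proof
    assume "rd (num (Suc n)) v"
    then have "rd (Sc (num n)) v" by simp
    then show False by cases (auto intro: Suc.hyps[THEN notE])
  qed
qed

section \<open>Substitution preserves reduction\<close>

lemma msub_struct_Suc [simp]: "(\<lambda>a. msub_struct 0 E (Suc (g a))) = msub_ren (\<lambda>a. Suc (g a))"
  by (rule ext) (simp add: msub_struct_def msub_ren_def)

lemma msub_struct_Hole [simp]: "msub_struct a Hole = msub_id"
  by (rule ext) (simp add: msub_struct_def msub_id_def)

lemma gsub_struct_weaken [simp]:
  "gsub Var (msub_struct 0 E) (mren (\<lambda>a. Suc (g a)) t) = mren (\<lambda>a. Suc (g a)) t"
  by (subst gsub_mren) (simp add: mren_as_gsub)

lemma gsub_ctx_struct_weaken [simp]:
  "gsub_ctx Var (msub_struct 0 F) (mren_ctx (\<lambda>a. Suc (g a)) E) = mren_ctx (\<lambda>a. Suc (g a)) E"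
  by (subst gsub_ctx_mren) (simp add: mren_ctx_as_gsub)

lemma gsub_subst0:
  "gsub \<sigma> \<theta> (subst0 t r) = subst0 (gsub (lift_lsub \<sigma>) (msub_lren Suc \<theta>) t) (gsub \<sigma> \<theta> r)"
proof -
  let ?r = "gsub \<sigma> \<theta> r"
  have "(\<lambda>a. gsub \<sigma> \<theta> (lsub0 r a)) = (\<lambda>a. gsub (lsub0 ?r) msub_id (lift_lsub \<sigma> a))"
  proof
    show "gsub \<sigma> \<theta> (lsub0 r i) = gsub (lsub0 ?r) msub_id (lift_lsub \<sigma> i)" for i
      by (cases i) (simp_all add: gsub_lren)
  qed
  moreover have "msub_comp \<sigma> \<theta> msub_id = msub_comp (lsub0 ?r) msub_id (msub_lren Suc \<theta>)"
    by (rule ext) (simp add: prod_eq_iff gsub_ctx_lren)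
  ultimately show ?thesis by (simp add: subst0_as_gsub gsub_gsub)
qed

lemma gsub_ssubc:
  "gsubc (\<lambda>i. mren Suc (\<sigma> i)) (lift_msub \<theta>) (ssubc 0 (mren_ctx Suc F) c)
   = ssubc 0 (mren_ctx Suc (gsub_ctx \<sigma> \<theta> F)) (gsubc (\<lambda>i. mren Suc (\<sigma> i)) (lift_msub \<theta>) c)"
proof -
  let ?G = "mren_ctx Suc (gsub_ctx \<sigma> \<theta> F)"
  have "msub_comp (\<lambda>i. mren Suc (\<sigma> i)) (lift_msub \<theta>) (msub_struct 0 (mren_ctx Suc F))
        = msub_comp Var (msub_struct 0 ?G) (lift_msub \<theta>)"
  proof
    show "msub_comp (\<lambda>i. mren Suc (\<sigma> i)) (lift_msub \<theta>) (msub_struct 0 (mren_ctx Suc F)) b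
          = msub_comp Var (msub_struct 0 ?G) (lift_msub \<theta>) b" for b
      by (cases b) (simp_all add: prod_eq_iff gsub_ctx_mren_Suc)
  qed
  then show ?thesis by (simp add: ssub_as_gsub gsub_gsub)
qed

lemma ssubc_ssubc: "ssubc 0 F (ssubc 0 (mren_ctx Suc E) c) = ssubc 0 (comp_ctx F (mren_ctx Suc E)) c"
proof -
  have "msub_comp Var (msub_struct 0 F) (msub_struct 0 (mren_ctx Suc E))
        = msub_struct 0 (comp_ctx F (mren_ctx Suc E))"
    by (rule ext) (simp add: prod_eq_iff)
  then show ?thesis by (simp add: ssub_as_gsub gsub_gsub)
qed

lemma rd_frame_absorb: "frame G \<Longrightarrow> \<exists>B. rd (fill G (Mu T c)) (Mu B (ssubc 0 (mren_ctx Suc G) c))"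
  by (cases rule: frame_cases) (auto intro!: exI rd_muR rd_muS rd_muN)

lemma pull_mu: "\<exists>T'. rds (fill E (Mu T c)) (Mu T' (ssubc 0 (mren_ctx Suc E) c))"
proof (induct E rule: ctx_frame_induct)
  case Hole
  show ?case by (auto simp: ssub_as_gsub)
next
  case (frame G E)
  then obtain T' where "rds (fill E (Mu T c)) (Mu T' (ssubc 0 (mren_ctx Suc E) c))" by blast
  then have "rds (fill G (fill E (Mu T c))) (fill G (Mu T' (ssubc 0 (mren_ctx Suc E) c)))"
    by (rule rds_cong(10))
  moreover obtain B where "rd (fill G (Mu T' (ssubc 0 (mren_ctx Suc E) c)))
      (Mu B (ssubc 0 (mren_ctx Suc G) (ssubc 0 (mren_ctx Suc E) c)))"
    using rd_frame_absorb[OF frame.hyps(1)] by blast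
  ultimately show ?case by (auto simp: ssubc_ssubc intro: rtranclp.rtrancl_into_rtrancl)
qed

lemma gsubc_mui:
  assumes \<theta>a: "\<theta> a = (a', E)"
  shows "mrenc (\<lambda>i. case i of 0 \<Rightarrow> a' | Suc j \<Rightarrow> j)
           (ssubc 0 (mren_ctx Suc E) (gsubc (\<lambda>i. mren Suc (\<sigma> i)) (lift_msub \<theta>) c))
         = gsubc \<sigma> \<theta> (mrenc (\<lambda>i. case i of 0 \<Rightarrow> a | Suc j \<Rightarrow> j) c)"
proof -
  let ?g' = "\<lambda>i. case i of 0 \<Rightarrow> a' | Suc j \<Rightarrow> j"
  let ?g = "\<lambda>i. case i of 0 \<Rightarrow> a | Suc j \<Rightarrow> j"
  let ?ss = "msub_struct 0 (mren_ctx Suc E)"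
  have "msub_mren ?g' (msub_comp Var ?ss (lift_msub \<theta>)) = (\<lambda>b. \<theta> (?g b))"
  proof
    show "msub_mren ?g' (msub_comp Var ?ss (lift_msub \<theta>)) b = \<theta> (?g b)" for b
      by (cases b) (simp_all add: prod_eq_iff \<theta>a)
  qed
  moreover have "(\<lambda>x. mren ?g' (gsub Var ?ss (mren Suc (\<sigma> x)))) = \<sigma>"
    by (rule ext) simp
  ultimately show ?thesis by (simp only: ssub_as_gsub gsub_gsub mren_gsub gsub_mren)
qed

text \<open>Substitution maps a reduction step to one or more reduction steps; more than
  one are needed for (mu i), where the context attached to the mu-variable has to
  be absorbed first.\<close>

lemma rd_gsub:
  "rd t t' \<Longrightarrow> rdp (gsub \<sigma> \<theta> t) (gsub \<sigma> \<theta> t')"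
  "rdc c c' \<Longrightarrow> rdcp (gsubc \<sigma> \<theta> c) (gsubc \<sigma> \<theta> c')"
proof (induct arbitrary: \<sigma> \<theta> and \<sigma> \<theta> rule: rd_rdc.inducts)
  case (rd_beta T t r)
  show ?case by (simp add: gsub_subst0 rd_rdc.rd_beta tranclp.r_into_trancl)
next
  case (rd_muS T c)
  show ?case using gsub_ssubc[of \<sigma> \<theta> "CSc Hole" c] by (auto intro: rd_rdc.rd_muS)
next
  case (rd_muR A c s B)
  show ?case using gsub_ssubc[of \<sigma> \<theta> "CApp Hole s" c] by (auto intro: rd_rdc.rd_muR)
next
  case (rd_mueta T u)
  show ?case by (auto simp: gsub_mren_Suc intro: rd_rdc.rd_mueta)
next
  case (rd_mui a T c)
  obtain a' E where \<theta>a: "\<theta> a = (a', E)" by (cases "\<theta> a") auto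
  let ?X = "gsubc (\<lambda>i. mren Suc (\<sigma> i)) (lift_msub \<theta>) c"
  obtain T' where "rds (fill E (Mu T ?X)) (Mu T' (ssubc 0 (mren_ctx Suc E) ?X))"
    using pull_mu by blast
  then have "rdcs (Pass a' (fill E (Mu T ?X))) (Pass a' (Mu T' (ssubc 0 (mren_ctx Suc E) ?X)))"
    by (rule rds_cong(9))
  moreover have "rdc (Pass a' (Mu T' (ssubc 0 (mren_ctx Suc E) ?X)))
     (mrenc (\<lambda>i. case i of 0 \<Rightarrow> a' | Suc j \<Rightarrow> j) (ssubc 0 (mren_ctx Suc E) ?X))"
    by (rule rd_rdc.rd_mui)
  ultimately show ?case using \<theta>a by (simp add: gsubc_mui[of \<theta> a a' E \<sigma> c, OF \<theta>a] rtranclp_into_tranclp1)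
next
  case (rd_muN R r s T c)
  show ?case using gsub_ssubc[of \<sigma> \<theta> "CNrec R r s Hole" c] by (auto intro: rd_rdc.rd_muN)
qed (auto intro: rd_rdc.intros rdp_cong)

section \<open>Reduction of evaluation contexts\<close>

inductive ctxred :: "ctx \<Rightarrow> ctx \<Rightarrow> bool" where
  ctxred_App1: "ctxred E E' \<Longrightarrow> ctxred (CApp E t) (CApp E' t)"
| ctxred_App2: "rd t t' \<Longrightarrow> ctxred (CApp E t) (CApp E t')"
| ctxred_Sc: "ctxred E E' \<Longrightarrow> ctxred (CSc E) (CSc E')"
| ctxred_Nrec1: "rd r r' \<Longrightarrow> ctxred (CNrec R r s E) (CNrec R r' s E)"
| ctxred_Nrec2: "rd s s' \<Longrightarrow> ctxred (CNrec R r s E) (CNrec R r s' E)"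
| ctxred_Nrec3: "ctxred E E' \<Longrightarrow> ctxred (CNrec R r s E) (CNrec R r s E')"

abbreviation ctxreds :: "ctx \<Rightarrow> ctx \<Rightarrow> bool" where "ctxreds \<equiv> ctxred\<^sup>*\<^sup>*"

lemma ctxred_fill: "ctxred E E' \<Longrightarrow> rd (fill E u) (fill E' u)"
  by (induct rule: ctxred.induct) (auto intro: rd_rdc.intros)

lemma ctxreds_fill: "ctxreds E E' \<Longrightarrow> rds (fill E u) (fill E' u)"
  by (rule rtranclp_map[where f="\<lambda>E. fill E u"]) (auto intro: ctxred_fill)

lemma ctxred_comp_ctx_left: "ctxred E E' \<Longrightarrow> ctxred (comp_ctx E F) (comp_ctx E' F)"
  by (induct rule: ctxred.induct) (auto intro: ctxred.intros)

lemma ctxred_comp_ctx_cases: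
  "ctxred (comp_ctx E F) G \<Longrightarrow>
   (\<exists>E'. ctxred E E' \<and> G = comp_ctx E' F) \<or> (\<exists>F'. ctxred F F' \<and> G = comp_ctx E F')"
proof (induct E arbitrary: G)
  case (CApp E t)
  from CApp.prems have "ctxred (CApp (comp_ctx E F) t) G" by simp
  then show ?case
  proof cases
    case (ctxred_App1 G')
    with CApp.hyps[of G'] show ?thesis by (auto intro: ctxred.intros)
  qed (auto intro: ctxred.intros)
next
  case (CSc E)
  from CSc.prems have "ctxred (CSc (comp_ctx E F)) G" by simp
  then show ?case
  proof cases
    case (ctxred_Sc G')
    with CSc.hyps[of G'] show ?thesis by (auto intro: ctxred.intros)
  qed
next
  case (CNrec R r s E)
  from CNrec.prems have "ctxred (CNrec R r s (comp_ctx E F)) G" by simp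
  then show ?case
  proof cases
    case (ctxred_Nrec3 G')
    with CNrec.hyps[of G'] show ?thesis by (auto intro: ctxred.intros)
  qed (auto intro: ctxred.intros)
qed simp

lemma ctxreds_cong:
  "ctxreds E E' \<Longrightarrow> ctxreds (CApp E t) (CApp E' t)"
  "rds t t' \<Longrightarrow> ctxreds (CApp E t) (CApp E t')"
  "ctxreds E E' \<Longrightarrow> ctxreds (CSc E) (CSc E')"
  "rds r r' \<Longrightarrow> ctxreds (CNrec R r s E) (CNrec R r' s E)"
  "rds s s' \<Longrightarrow> ctxreds (CNrec R r s E) (CNrec R r s' E)"
  "ctxreds E E' \<Longrightarrow> ctxreds (CNrec R r s E) (CNrec R r s E')"
  by - (erule rtranclp_induct; auto intro: ctxred.intros rtranclp.rtrancl_into_rtrancl)+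

lemma rds_gsub: "rds t t' \<Longrightarrow> rds (gsub \<sigma> \<theta> t) (gsub \<sigma> \<theta> t')"
  by (rule rtranclp_map[where f="gsub \<sigma> \<theta>"]) (auto dest: rd_gsub tranclp_into_rtranclp)

lemma ctxreds_gsub_ctx: "ctxreds E E' \<Longrightarrow> ctxreds (gsub_ctx \<sigma> \<theta> E) (gsub_ctx \<sigma> \<theta> E')"
proof (rule rtranclp_map[where f="gsub_ctx \<sigma> \<theta>"])
  show "ctxreds (gsub_ctx \<sigma> \<theta> E) (gsub_ctx \<sigma> \<theta> E')" if "ctxred E E'" for E E'
    using that
    by (induct rule: ctxred.induct)
      (simp_all add: ctxreds_cong rds_gsub[OF r_into_rtranclp])
qed

lemma rds_renamings:
  "rds t t' \<Longrightarrow> rds (lren f t) (lren f t')"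
  "rds t t' \<Longrightarrow> rds (mren f t) (mren f t')"
  "ctxreds E E' \<Longrightarrow> ctxreds (lren_ctx f E) (lren_ctx f E')"
  "ctxreds E E' \<Longrightarrow> ctxreds (mren_ctx f E) (mren_ctx f E')"
  by (simp_all add: lren_as_gsub mren_as_gsub lren_ctx_as_gsub mren_ctx_as_gsub
      rds_gsub ctxreds_gsub_ctx)

definition msub_reds :: "(nat \<Rightarrow> nat \<times> ctx) \<Rightarrow> (nat \<Rightarrow> nat \<times> ctx) \<Rightarrow> bool" where
  "msub_reds \<theta> \<theta>' \<longleftrightarrow> (\<forall>b. fst (\<theta> b) = fst (\<theta>' b) \<and> ctxreds (snd (\<theta> b)) (snd (\<theta>' b)))"

lemma lift_lsub_rds: "\<forall>x. rds (\<sigma> x) (\<sigma>' x) \<Longrightarrow> \<forall>x. rds (lift_lsub \<sigma> x) (lift_lsub \<sigma>' x)"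
  by (auto simp: lift_lsub_def rds_renamings split: nat.split)

lemma msub_reds_lift: "msub_reds \<theta> \<theta>' \<Longrightarrow> msub_reds (lift_msub \<theta>) (lift_msub \<theta>')"
  by (auto simp: msub_reds_def lift_msub_def rds_renamings split: nat.split)

lemma msub_reds_lren: "msub_reds \<theta> \<theta>' \<Longrightarrow> msub_reds (msub_lren f \<theta>) (msub_lren f \<theta>')"
  by (simp add: msub_reds_def rds_renamings)

lemma gsub_rds_mono:
  assumes "\<forall>x. rds (\<sigma> x) (\<sigma>' x)" and "msub_reds \<theta> \<theta>'"
  shows "rds (gsub \<sigma> \<theta> t) (gsub \<sigma>' \<theta>' t)" and "rdcs (gsubc \<sigma> \<theta> c) (gsubc \<sigma>' \<theta>' c)"
proof -
  have "(\<forall>x. rds (\<sigma> x) (\<sigma>' x)) \<longrightarrow> msub_reds \<theta> \<theta>' \<longrightarrow> rds (gsub \<sigma> \<theta> t) (gsub \<sigma>' \<theta>' t)"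
    "(\<forall>x. rds (\<sigma> x) (\<sigma>' x)) \<longrightarrow> msub_reds \<theta> \<theta>' \<longrightarrow> rdcs (gsubc \<sigma> \<theta> c) (gsubc \<sigma>' \<theta>' c)"
  proof (induct t and c arbitrary: \<sigma> \<theta> \<sigma>' \<theta>' and \<sigma> \<theta> \<sigma>' \<theta>' rule: trm.induct cmd.induct)
    case (Lam T t)
    then show ?case by (simp add: lift_lsub_rds msub_reds_lren rds_cong(1))
  next
    case (App t s)
    then show ?case by (auto intro!: rtranclp_trans[OF rds_cong(2) rds_cong(3)])
  next
    case (Mu T c)
    then show ?case by (simp add: rds_renamings msub_reds_lift rds_cong(4))
  next
    case (Nrec R r s t)
    then show ?case
      by (auto intro!: rtranclp_trans[OF rtranclp_trans[OF rds_cong(6) rds_cong(7)] rds_cong(8)])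
  next
    case (Pass a t)
    then show ?case
      by (auto simp: msub_reds_def intro!: rds_cong(9) rtranclp_trans[OF ctxreds_fill rds_cong(10)])
  qed (auto intro: rds_cong)
  with assms show "rds (gsub \<sigma> \<theta> t) (gsub \<sigma>' \<theta>' t)" "rdcs (gsubc \<sigma> \<theta> c) (gsubc \<sigma>' \<theta>' c)"
    by blast+
qed
section \<open>Strongly normalising terms\<close>

lemma SN_subterms:
  "SN rd (fill E u) \<Longrightarrow> SN rd u"
  "SN rd (fill E u) \<Longrightarrow> SN ctxred E"
  "SN rd (App t s) \<Longrightarrow> SN rd t"
  "SN rd (Mu T c) \<Longrightarrow> SN rdc c"
  "SN rdc (Pass a u) \<Longrightarrow> SN rd u"
  by (erule SN_simulation1, auto intro: rd_in_ctx ctxred_fill rd_rdc.intros)+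

lemma SN_gsub_back: "SN rd (gsub \<sigma> \<theta> t) \<Longrightarrow> SN rd t"
  by (erule SN_simulation) (rule rd_gsub)

lemma SN_num: "SN rd (num n)"
  by (rule SN_intro) (simp add: num_normal)

text \<open>The main work is for (mu eta), where one has to see that the body
  of the renamed redex was already a weakening.\<close>

lemma ext_image_Suc: "(Suc a \<in> ext f ` S) = (a \<in> f ` {j. Suc j \<in> S})"
proof
  assume "Suc a \<in> ext f ` S"
  then obtain x where "x \<in> S" "Suc a = ext f x" by auto
  then show "a \<in> f ` {j. Suc j \<in> S}" by (cases x) auto
next
  assume "a \<in> f ` {j. Suc j \<in> S}"
  then obtain j where "Suc j \<in> S" "a = f j" by auto
  then show "Suc a \<in> ext f ` S" by (auto intro: image_eqI[of _ _ "Suc j"])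
qed

lemma FCV_mren: "FCV (mren f t) = f ` FCV t" "FCVc (mrenc f c) = f ` FCVc c"
proof (induct t and c arbitrary: f and f rule: trm.induct cmd.induct)
  case (Mu T c)
  then show ?case by (simp add: ext_image_Suc)
qed (simp_all add: image_Un)

lemma mren_Suc_inj: "mren Suc x = mren Suc y \<Longrightarrow> x = y"
  by (drule arg_cong[where f="mren (\<lambda>i. i - 1)"]) simp

lemma mren_ext_eq_Suc:
  assumes eq: "mren Suc w = mren (ext f) t"
  shows "\<exists>w0. t = mren Suc w0 \<and> w = mren f w0"
proof -
  have "0 \<notin> ext f ` FCV t" using FCV_mren(1)[of Suc w] by (simp add: eq FCV_mren(1))
  then have "0 \<notin> FCV t" using imageI[of 0 "FCV t" "ext f"] by auto
  define t' where "t' = mren (\<lambda>i. i - 1) t"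
  have t: "t = mren Suc t'" unfolding t'_def by (rule FCV_unshift[symmetric]) fact
  have "mren Suc w = mren Suc (mren f t')" using eq by (simp add: t)
  with t show ?thesis by (blast dest: mren_Suc_inj)
qed

lemma msub_mren_msub_id [simp]: "msub_mren f msub_id = msub_ren f"
  by (rule ext) (simp add: msub_mren_def msub_id_def msub_ren_def)

text \<open>Not a simplification rule, for the same reason as \<open>msub_lren_comp\<close>.\<close>

lemma msub_id_comp: "(\<lambda>a. msub_id (f a)) = msub_ren f"
  by (rule ext) (simp add: msub_id_def msub_ren_def)

lemma mren_subst0: "mren f (subst0 t r) = subst0 (mren f t) (mren f r)"
proof -
  have "(\<lambda>a. mren f (lsub0 r a)) = lsub0 (mren f r)"
  proof
    show "mren f (lsub0 r i) = lsub0 (mren f r) i" for i by (cases i) simp_all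
  qed
  then show ?thesis by (simp add: subst0_as_gsub mren_gsub gsub_mren msub_id_comp[of f])
qed

lemma mren_ssubc:
  "mrenc (ext f) (ssubc 0 (mren_ctx Suc F) c) = ssubc 0 (mren_ctx Suc (mren_ctx f F)) (mrenc (ext f) c)"
  using gsub_ssubc[of Var "msub_ren f" F c]
  by (simp add: mren_as_gsub(2)[symmetric] mren_ctx_as_gsub[symmetric])

lemma mren_mui:
  "(\<lambda>x. f (case x of 0 \<Rightarrow> a | Suc j \<Rightarrow> j)) = (\<lambda>x. case ext f x of 0 \<Rightarrow> f a | Suc j \<Rightarrow> j)"
proof
  show "f (case x of 0 \<Rightarrow> a | Suc j \<Rightarrow> j) = (case ext f x of 0 \<Rightarrow> f a | Suc j \<Rightarrow> j)" for x
    by (cases x) simp_all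
qed

lemma mren_eq_iff:
  "Var x = mren f u \<longleftrightarrow> u = Var x"
  "Lam T t = mren f u \<longleftrightarrow> (\<exists>t0. u = Lam T t0 \<and> t = mren f t0)"
  "App a b = mren f u \<longleftrightarrow> (\<exists>a0 b0. u = App a0 b0 \<and> a = mren f a0 \<and> b = mren f b0)"
  "Mu T c = mren f u \<longleftrightarrow> (\<exists>c0. u = Mu T c0 \<and> c = mrenc (ext f) c0)"
  "Zero = mren f u \<longleftrightarrow> u = Zero"
  "Sc t = mren f u \<longleftrightarrow> (\<exists>t0. u = Sc t0 \<and> t = mren f t0)"
  "Nrec R r s t = mren f u \<longleftrightarrow>
     (\<exists>r0 s0 t0. u = Nrec R r0 s0 t0 \<and> r = mren f r0 \<and> s = mren f s0 \<and> t = mren f t0)"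
  by (cases u; auto)+

lemma mrenc_eq_iff: "Pass k t = mrenc f d \<longleftrightarrow> (\<exists>k0 t0. d = Pass k0 t0 \<and> k = f k0 \<and> t = mren f t0)"
  by (cases d) auto

lemma num_eq_mren: "num n = mren f u \<longleftrightarrow> u = num n"
  by (induct n arbitrary: u) (auto simp: mren_eq_iff mrenc_eq_iff)

lemma mren_reflects_rd:
  "rd t v \<Longrightarrow> t = mren f u \<Longrightarrow> \<exists>u'. rd u u' \<and> v = mren f u'"
  "rdc c w \<Longrightarrow> c = mrenc f d \<Longrightarrow> \<exists>d'. rdc d d' \<and> w = mrenc f d'"
proof (induct arbitrary: f u and f d rule: rd_rdc.inducts)
  case (rd_beta T t r)
  then show ?case by (auto simp: mren_eq_iff mren_subst0 intro: rd_rdc.rd_beta)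
next
  case (rd_muS T c)
  then obtain c0 where "u = Sc (Mu T c0)" "c = mrenc (ext f) c0" by (auto simp: mren_eq_iff mrenc_eq_iff)
  then show ?case using mren_ssubc[of f "CSc Hole" c0] by (auto intro: rd_rdc.rd_muS)
next
  case (rd_muR A c s B)
  then obtain c0 s0 where "u = App (Mu A c0) s0" "c = mrenc (ext f) c0" "s = mren f s0"
    by (auto simp: mren_eq_iff mrenc_eq_iff)
  then show ?case using mren_ssubc[of f "CApp Hole s0" c0] by (auto intro: rd_rdc.rd_muR)
next
  case (rd_mueta T w)
  then obtain a0 t0 where "u = Mu T (Pass a0 t0)" "0 = ext f a0" "mren Suc w = mren (ext f) t0"
    by (auto simp: mren_eq_iff mrenc_eq_iff)
  moreover then have "a0 = 0" by (cases a0) auto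
  ultimately show ?case by (auto dest!: mren_ext_eq_Suc intro: rd_rdc.rd_mueta)
next
  case (rd_mui a T c)
  then obtain a0 c0 where "d = Pass a0 (Mu T c0)" "a = f a0" "c = mrenc (ext f) c0"
    by (auto simp: mren_eq_iff mrenc_eq_iff)
  then show ?case by (auto simp: mren_mui intro: rd_rdc.rd_mui)
next
  case (rd_muN R r s T c)
  then obtain r0 s0 c0 where "u = Nrec R r0 s0 (Mu T c0)" "r = mren f r0" "s = mren f s0"
    "c = mrenc (ext f) c0"
    by (auto simp: mren_eq_iff mrenc_eq_iff)
  then show ?case using mren_ssubc[of f "CNrec R r0 s0 Hole" c0] by (auto intro: rd_rdc.rd_muN)
qed (fastforce simp: mren_eq_iff mrenc_eq_iff num_eq_mren intro: rd_rdc.intros)+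

lemma SN_mren: "SN rd u \<Longrightarrow> SN rd (mren f u)"
  by (erule SN_reflection) (rule mren_reflects_rd(1), simp_all)

lemma SN_mrenc: "SN rdc c \<Longrightarrow> SN rdc (mrenc f c)"
  by (erule SN_reflection) (rule mren_reflects_rd(2), simp_all)

lemma SN_mren_back: "SN rd (mren f t) \<Longrightarrow> SN rd t"
  by (simp add: mren_as_gsub SN_gsub_back)

text \<open>A command is strongly normalising as soon as its body is: a (mu i) step out
  of \<open>[b]\<mu>\<alpha>.c\<close> yields a renaming of \<open>c\<close>.\<close>

lemma SN_Pass: "SN rd u \<Longrightarrow> SN rdc (Pass b u)"
proof (induct rule: accp.induct)
  case (accI u)
  have "SN rd u" by (rule accp.accI) (use accI.hyps(1) in simp)
  show ?case
  proof (rule SN_intro)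
    fix y assume "rdc (Pass b u) y"
    then show "SN rdc y"
    proof (cases rule: rdc.cases)
      case (rd_mui T c)
      then show ?thesis using \<open>SN rd u\<close> by (auto intro: SN_mrenc dest: SN_subterms(4))
    next
      case (rd_Pass t')
      then show ?thesis using accI.hyps(2) by auto
    qed
  qed
qed

section \<open>Reductions inside an evaluation context\<close>

text \<open>A term is neutral if no evaluation context around it creates a redex.\<close>

definition neutral :: "trm \<Rightarrow> bool" where
  "neutral u \<longleftrightarrow> (\<exists>x. u = Var x) \<or> (\<exists>a b. u = App a b) \<or> (\<exists>R r s t. u = Nrec R r s t)"

lemma neutral_simps [simp]: "neutral (Var x)" "neutral (App a b)" "neutral (Nrec R r s t)"
  by (auto simp: neutral_def)

lemma fill_eq_num: "fill E u = num n \<Longrightarrow> \<exists>m. u = num m"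
  by (induct E arbitrary: n) (auto, metis num.elims trm.inject(5) trm.simps)

lemma fill_neutral_not_value:
  assumes "neutral u"
  shows "fill E u \<noteq> Lam T t" "fill E u \<noteq> Mu T c" "fill E u \<noteq> Zero" "fill E u \<noteq> Sc (num n)"
  using assms fill_eq_num[of E u 0] fill_eq_num[of E u "Suc n"]
  by (cases E; auto simp: neutral_def)+

lemma fill_Mu_not_value:
  "fill E (Mu A c) \<noteq> Lam T t" "fill E (Mu A c) \<noteq> Zero" "fill E (Mu A c) \<noteq> Sc (num n)"
  using fill_eq_num[of E "Mu A c" 0] fill_eq_num[of E "Mu A c" "Suc n"]
  by (cases E; auto)+

lemma fill_eq_Mu: "fill E (Mu A c) = Mu B d \<Longrightarrow> E = Hole \<and> A = B \<and> c = d"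
  by (cases E) auto

inductive inner_step :: "ctx \<Rightarrow> trm \<Rightarrow> trm \<Rightarrow> bool" where
  in_hole: "rd u u' \<Longrightarrow> inner_step E u (fill E u')"
| in_ctx: "ctxred E E' \<Longrightarrow> inner_step E u (fill E' u)"

lemma inner_step_frame:
  assumes "inner_step E u w" and "frame G"
  shows "inner_step (comp_ctx G E) u (fill G w)"
  using assms(1)
proof cases
  case (in_hole u')
  then show ?thesis using inner_step.in_hole[of u u' "comp_ctx G E"] by simp
next
  case (in_ctx E')
  then have "ctxred (comp_ctx G E) (comp_ctx G E')"
    using \<open>frame G\<close> by (auto simp: frame_def intro: ctxred.intros)
  then show ?thesis using in_ctx inner_step.in_ctx by fastforce
qed

lemma inner_step_comp_ctx:
  assumes "inner_step G (fill E u) v" and "frame G"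
    and IH: "\<And>w. rd (fill E u) w \<Longrightarrow> inner_step E u w"
  shows "inner_step (comp_ctx G E) u v"
  using assms(1)
proof cases
  case (in_hole w)
  then show ?thesis using inner_step_frame[OF IH \<open>frame G\<close>] by simp
next
  case (in_ctx G')
  then show ?thesis using inner_step.in_ctx[OF ctxred_comp_ctx_left, of G G' E u] by simp
qed

lemma rd_frame_cases:
  assumes "rd (fill G x) v" and "frame G"
  shows "inner_step G x v \<or> (\<exists>T b. x = Lam T b) \<or> (\<exists>T c. x = Mu T c) \<or> x = Zero \<or> (\<exists>n. x = Sc (num n))"
  using assms(2)
proof (cases rule: frame_cases)
  case (App s)
  from assms(1) have "rd (App x s) v" using App by simp
  then show ?thesis using App
    by cases (auto intro: inner_step.in_hole[of x _ "CApp Hole s", simplified]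
        inner_step.in_ctx[OF ctxred_App2, of _ _ Hole x, simplified])
next
  case Sc
  from assms(1) have "rd (Sc x) v" using Sc by simp
  then show ?thesis using Sc by cases (auto intro: inner_step.in_hole[of x _ "CSc Hole", simplified])
next
  case (Nrec R r s)
  from assms(1) have "rd (Nrec R r s x) v" using Nrec by simp
  then show ?thesis using Nrec
    by cases (auto intro: inner_step.in_hole[of x _ "CNrec R r s Hole", simplified]
        inner_step.in_ctx[OF ctxred_Nrec1, of _ _ R s Hole x, simplified]
        inner_step.in_ctx[OF ctxred_Nrec2, of _ _ R r Hole x, simplified])
qed

lemma rd_frame_Mu:
  assumes "rd (fill G (Mu A c)) v" and "frame G"
  shows "inner_step G (Mu A c) v \<or> (\<exists>B. v = Mu B (ssubc 0 (mren_ctx Suc G) c))"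
  using assms(2)
proof (cases rule: frame_cases)
  case (App s)
  from assms(1) have "rd (App (Mu A c) s) v" using App by simp
  then show ?thesis using App
    by cases (auto intro: inner_step.in_hole[of "Mu A c" _ "CApp Hole s", simplified]
        inner_step.in_ctx[OF ctxred_App2, of _ _ Hole "Mu A c", simplified])
next
  case Sc
  from assms(1) have "rd (Sc (Mu A c)) v" using Sc by simp
  then show ?thesis using Sc by cases (auto intro: inner_step.in_hole[of "Mu A c" _ "CSc Hole", simplified])
next
  case (Nrec R r s)
  from assms(1) have "rd (Nrec R r s (Mu A c)) v" using Nrec by simp
  then show ?thesis using Nrec
    by cases (auto intro: inner_step.in_hole[of "Mu A c" _ "CNrec R r s Hole", simplified]
        inner_step.in_ctx[OF ctxred_Nrec1, of _ _ R s Hole "Mu A c", simplified]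
        inner_step.in_ctx[OF ctxred_Nrec2, of _ _ R r Hole "Mu A c", simplified])
qed

lemma rd_fill_neutral: "rd (fill E u) v \<Longrightarrow> neutral u \<Longrightarrow> inner_step E u v"
proof (induct E arbitrary: v rule: ctx_frame_induct)
  case Hole
  then show ?case using inner_step.in_hole[of u v Hole] by simp
next
  case (frame G E)
  then have "inner_step G (fill E u) v"
    using rd_frame_cases[of G "fill E u" v] fill_neutral_not_value[OF frame.prems(2)] by auto
  then show ?case using frame by (blast intro: inner_step_comp_ctx)
qed

definition mu_step :: "ctx \<Rightarrow> ty \<Rightarrow> cmd \<Rightarrow> trm \<Rightarrow> bool" where
  "mu_step E A c v \<longleftrightarrow> inner_step E (Mu A c) v \<or>
     (\<exists>E0 F B. E = comp_ctx E0 F \<and> frame F \<and> v = fill E0 (Mu B (ssubc 0 (mren_ctx Suc F) c)))"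

lemma mu_step_frame:
  assumes "mu_step E A c w" and "frame G"
  shows "mu_step (comp_ctx G E) A c (fill G w)"
  using assms(1)[unfolded mu_step_def]
proof (elim disjE exE conjE)
  fix E0 F B assume "E = comp_ctx E0 F" "frame F" "w = fill E0 (Mu B (ssubc 0 (mren_ctx Suc F) c))"
  then show ?thesis
    unfolding mu_step_def by (intro disjI2 exI[of _ "comp_ctx G E0"] exI[of _ F] exI[of _ B]) simp
qed (simp add: mu_step_def inner_step_frame \<open>frame G\<close>)

lemma rd_fill_Mu: "rd (fill E (Mu A c)) v \<Longrightarrow> mu_step E A c v"
proof (induct E arbitrary: v rule: ctx_frame_induct)
  case Hole
  then show ?case using inner_step.in_hole[of "Mu A c" v Hole] by (simp add: mu_step_def)
next
  case (frame G E)
  show ?case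
  proof (cases "E = Hole")
    case True
    with frame have "rd (fill G (Mu A c)) v" by simp
    then have "inner_step G (Mu A c) v \<or> (\<exists>B. v = Mu B (ssubc 0 (mren_ctx Suc G) c))"
      using \<open>frame G\<close> by (rule rd_frame_Mu)
    then show ?thesis
    proof (elim disjE exE)
      fix B assume "v = Mu B (ssubc 0 (mren_ctx Suc G) c)"
      then show ?thesis using True \<open>frame G\<close> unfolding mu_step_def
        by (intro disjI2 exI[of _ Hole] exI[of _ G] exI[of _ B]) simp
    qed (simp add: True mu_step_def)
  next
    case False
    then have "inner_step G (fill E (Mu A c)) v"
      using rd_frame_cases[of G "fill E (Mu A c)" v] frame fill_Mu_not_value by (auto dest: fill_eq_Mu)
    then show ?thesis
    proof cases
      case (in_hole w)
      then show ?thesis using frame mu_step_frame by blast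
    next
      case (in_ctx G')
      then show ?thesis using inner_step.in_ctx[OF ctxred_comp_ctx_left, of G G' E "Mu A c"]
        by (simp add: mu_step_def)
    qed
  qed
qed

section \<open>Strongly normalising contexts\<close>

lemma SN_comp_ctx_left: "SN ctxred (comp_ctx E F) \<Longrightarrow> SN ctxred E"
  by (erule SN_simulation1) (rule ctxred_comp_ctx_left)

lemma SN_comp_ctx: "SN ctxred E \<Longrightarrow> SN ctxred F \<Longrightarrow> SN ctxred (comp_ctx E F)"
proof (induct E arbitrary: F rule: SN_induct)
  case (step E)
  note IH_outer = step.hyps(2)
  from step.prems show ?case
  proof (induct F rule: SN_induct)
    case (step F)
    show ?case
    proof (rule SN_intro)
      fix G assume "ctxred (comp_ctx E F) G"
      then show "SN ctxred G"
        using ctxred_comp_ctx_cases step.hyps(2) \<open>SN ctxred F\<close> IH_outer by blast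
    qed
  qed
qed

lemma SN_ctx_arg: "SN rd s \<Longrightarrow> SN ctxred (CApp Hole s)"
proof (induct rule: SN_induct)
  case (step s)
  show ?case
  proof (rule SN_intro)
    fix G assume "ctxred (CApp Hole s) G"
    then show "SN ctxred G" by cases (auto elim: ctxred.cases intro: step.hyps(2))
  qed
qed

section \<open>Head expansion\<close>

text \<open>In a strongly normalising context, a variable is strongly normalising, and a
  redex is strongly normalising as soon as its contractum (and, for redexes that
  may erase an argument, that argument) is.\<close>

lemma SN_fill_Var: "SN ctxred E \<Longrightarrow> SN rd (fill E (Var x))"
proof (induct rule: SN_induct)
  case (step E)
  show ?case
  proof (rule SN_intro)
    fix v assume "rd (fill E (Var x)) v"
    then have "inner_step E (Var x) v" by (simp add: rd_fill_neutral)
    then show "SN rd v" by cases (auto elim: rd.cases intro: step.hyps(2))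
  qed
qed

text \<open>The argument is needed because a redex may erase it.\<close>

lemma SN_fill_head_expansion:
  fixes redex contr :: "'q \<Rightarrow> trm \<Rightarrow> trm"
  assumes neutral: "\<And>q a. neutral (redex q a)"
    and steps: "\<And>q a u'. rd (redex q a) u' \<Longrightarrow> u' = contr q a
        \<or> (\<exists>q'. u' = redex q' a \<and> rdp (contr q a) (contr q' a))
        \<or> (\<exists>a'. u' = redex q a' \<and> rd a a' \<and> rds (contr q a) (contr q a'))"
  shows "SN rd a \<Longrightarrow> SN rd (fill E (contr q a)) \<Longrightarrow> SN rd (fill E (redex q a))"
proof (induct a arbitrary: E q rule: SN_induct)
  case (step a)
  note IH_arg = step.hyps(2)
  have "\<forall>E q. X = fill E (contr q a) \<longrightarrow> SN rd (fill E (redex q a))" if "SN rd X" for X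
    using that
  proof (induct rule: SN_induct)
    case (step X)
    show ?case
    proof (intro allI impI, rule SN_intro)
      fix E q v assume X: "X = fill E (contr q a)" and "rd (fill E (redex q a)) v"
      then have "inner_step E (redex q a) v" using neutral by (simp add: rd_fill_neutral)
      then show "SN rd v"
      proof cases
        case (in_hole u')
        from steps[OF \<open>rd (redex q a) u'\<close>] show ?thesis
        proof (elim disjE exE conjE)
          assume "u' = contr q a"
          then show ?thesis using step.hyps(1) X in_hole by simp
        next
          fix q' assume u': "u' = redex q' a" and "rdp (contr q a) (contr q' a)"
          then have "rdp X (fill E (contr q' a))" unfolding X by (simp add: rdp_cong(10))
          then have "SN rd (fill E (redex q' a))" using step.hyps(2) by blast
          then show ?thesis using in_hole u' by simp
        next
          fix a' assume u': "u' = redex q a'" and "rd a a'" and "rds (contr q a) (contr q a')"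
          then have "rds X (fill E (contr q a'))" unfolding X by (simp add: rds_cong(10))
          then have "SN rd (fill E (contr q a'))" using step.hyps(1) by (rule SN_steps)
          then have "SN rd (fill E (redex q a'))"
            using IH_arg[OF tranclp.r_into_trancl[of rd, OF \<open>rd a a'\<close>]] by blast
          then show ?thesis using in_hole u' by simp
        qed
      next
        case (in_ctx E')
        then have "rdp X (fill E' (contr q a))" unfolding X by (auto intro: ctxred_fill tranclp.r_into_trancl)
        then have "SN rd (fill E' (redex q a))" using step.hyps(2) by blast
        then show ?thesis using in_ctx by simp
      qed
    qed
  qed
  then show ?case using step.prems by blast
qed

lemma SN_fill_beta:
  assumes "SN rd s" and "SN rd (fill E (subst0 b s))"
  shows "SN rd (fill E (App (Lam T b) s))"
proof (rule SN_fill_head_expansion[where redex="\<lambda>b s. App (Lam T b) s" and contr=subst0, OF _ _ assms])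
  fix b s u' assume "rd (App (Lam T b) s) u'"
  then show "u' = subst0 b s \<or> (\<exists>b'. u' = App (Lam T b') s \<and> rdp (subst0 b s) (subst0 b' s))
      \<or> (\<exists>s'. u' = App (Lam T b) s' \<and> rd s s' \<and> rds (subst0 b s) (subst0 b s'))"
  proof cases
    case (rd_App1 w)
    then obtain b' where "rd b b'" and "w = Lam T b'" by (auto elim: rd.cases)
    then show ?thesis using rd_App1 by (auto simp: subst0_as_gsub rd_gsub)
  next
    case (rd_App2 s')
    have "rds (subst0 b s) (subst0 b s')"
      unfolding subst0_as_gsub
      by (rule gsub_rds_mono) (auto simp: lsub0_def msub_reds_def \<open>rd s s'\<close> split: nat.split)
    then show ?thesis using rd_App2 by blast
  qed simp_all
qed simp

lemma SN_fill_zero: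
  assumes "SN rd s" and "SN rd (fill E r)"
  shows "SN rd (fill E (Nrec R r s Zero))"
proof (rule SN_fill_head_expansion[where redex="\<lambda>r s. Nrec R r s Zero" and contr="\<lambda>r s. r", OF _ _ assms])
  fix r s u' assume "rd (Nrec R r s Zero) u'"
  then show "u' = r \<or> (\<exists>r'. u' = Nrec R r' s Zero \<and> rdp r r')
      \<or> (\<exists>s'. u' = Nrec R r s' Zero \<and> rd s s' \<and> rds r r)"
    by cases (auto elim: rd.cases)
qed simp

text \<open>The successor rule erases nothing, so its argument is a dummy.\<close>

lemma SN_fill_suc:
  assumes "SN rd (fill E (App (App s (num n)) (Nrec R r s (num n))))"
  shows "SN rd (fill E (Nrec R r s (Sc (num n))))"
proof -
  let ?redex = "\<lambda>q (_::trm). Nrec R (fst q) (snd q) (Sc (num n))"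
  let ?contr = "\<lambda>q (_::trm). App (App (snd q) (num n)) (Nrec R (fst q) (snd q) (num n))"
  have "rd (?redex q a) u' \<Longrightarrow> u' = ?contr q a
        \<or> (\<exists>q'. u' = ?redex q' a \<and> rdp (?contr q a) (?contr q' a))
        \<or> (\<exists>a'. u' = ?redex q a' \<and> rd a a' \<and> rds (?contr q a) (?contr q a'))" for q a u'
  proof (cases q)
    case (Pair r s)
    assume "rd (?redex q a) u'"
    then have "rd (Nrec R r s (Sc (num n))) u'" using Pair by simp
    then show ?thesis
    proof cases
      case (rd_Nrec1 r')
      then show ?thesis using Pair by (auto intro!: exI[of _ "(r', s)"] tranclp.r_into_trancl rd_rdc.intros)
    next
      case (rd_Nrec2 s')
      then have "rdp (App (App s (num n)) (Nrec R r s (num n))) (App (App s' (num n)) (Nrec R r s' (num n)))"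
        by (meson rd_rdc.intros tranclp.r_into_trancl tranclp.trancl_into_trancl)
      then show ?thesis using rd_Nrec2 Pair by (auto intro!: exI[of _ "(r, s')"])
    next
      case (rd_Nrec3 t')
      then show ?thesis using num_normal[of "Suc n"] by simp
    qed (use Pair in simp_all)
  qed
  from SN_fill_head_expansion[where redex="?redex" and contr="?contr" and q="(r, s)", OF _ this SN_num[of 0]] assms
  show ?thesis by simp
qed

text \<open>The number of layers of a context; absorbing a frame into a mu-abstraction
  decreases it, while reducing inside the context preserves it.\<close>

fun ctx_depth :: "ctx \<Rightarrow> nat" where
  "ctx_depth Hole = 0"
| "ctx_depth (CApp E t) = Suc (ctx_depth E)"
| "ctx_depth (CSc E) = Suc (ctx_depth E)"
| "ctx_depth (CNrec R r s E) = Suc (ctx_depth E)"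

lemma ctx_depth_comp_ctx [simp]: "ctx_depth (comp_ctx E F) = ctx_depth E + ctx_depth F"
  by (induct E) simp_all

lemma ctx_depth_frame: "frame F \<Longrightarrow> ctx_depth F = 1"
  by (auto simp: frame_def)

lemma ctx_depth_ctxred: "ctxred E E' \<Longrightarrow> ctx_depth E' = ctx_depth E"
  by (induct rule: ctxred.induct) simp_all

lemma rdc_ssubc: "rdc c c' \<Longrightarrow> rdcp (ssubc 0 F c) (ssubc 0 F c')"
  by (simp add: ssub_as_gsub rd_gsub)

lemma ctxred_ssubc:
  assumes "ctxred E E'"
  shows "rdcs (ssubc 0 (mren_ctx Suc E) c) (ssubc 0 (mren_ctx Suc E') c)"
  unfolding ssub_as_gsub
  by (rule gsub_rds_mono(2)) (simp_all add: msub_reds_def rds_renamings(4) r_into_rtranclp assms)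

lemma SN_fill_Mu_hole:
  assumes "SN rdc (ssubc 0 (mren_ctx Suc E) c)" and "rd (Mu A c) u'"
    and IH: "\<And>c'. rdc c c' \<Longrightarrow> SN rd (fill E (Mu A c'))"
  shows "SN rd (fill E u')"
  using assms(2)
proof cases
  case rd_mueta
  then have "SN rdc (Pass 0 (mren Suc (fill E u')))" using assms(1) by (simp add: ssub_as_gsub)
  then have "SN rd (mren Suc (fill E u'))" by (rule SN_subterms(5))
  then show ?thesis by (rule SN_mren_back)
next
  case (rd_Mu c')
  then show ?thesis using IH by simp
qed

lemma SN_fill_Mu_step:
  assumes "SN rdc X"
    and IH_cmd: "\<And>Y E c A. rdcp X Y \<Longrightarrow> Y = ssubc 0 (mren_ctx Suc E) c \<Longrightarrow> SN ctxred E
                   \<Longrightarrow> SN rd (fill E (Mu A c))"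
    and IH_depth: "\<And>E c A. ctx_depth E < d \<Longrightarrow> X = ssubc 0 (mren_ctx Suc E) c \<Longrightarrow> SN ctxred E
                   \<Longrightarrow> SN rd (fill E (Mu A c))"
  shows "SN ctxred E \<Longrightarrow> ctx_depth E = d \<Longrightarrow> X = ssubc 0 (mren_ctx Suc E) c \<Longrightarrow> SN rd (fill E (Mu A c))"
proof (induct E arbitrary: c A rule: SN_induct)
  case (step E)
  note X = \<open>X = ssubc 0 (mren_ctx Suc E) c\<close>
  show ?case
  proof (rule SN_intro)
    fix v assume "rd (fill E (Mu A c)) v"
    then have "mu_step E A c v" by (rule rd_fill_Mu)
    then show "SN rd v" unfolding mu_step_def
    proof (elim disjE exE conjE)
      assume "inner_step E (Mu A c) v"
      then show ?thesis
      proof cases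
        case (in_hole u')
        have "SN rd (fill E u')"
        proof (rule SN_fill_Mu_hole)
          show "SN rdc (ssubc 0 (mren_ctx Suc E) c)" using \<open>SN rdc X\<close> X by simp
          show "SN rd (fill E (Mu A c'))" if "rdc c c'" for c'
            using that X IH_cmd step.hyps(1) by (blast intro: rdc_ssubc)
        qed (rule \<open>rd (Mu A c) u'\<close>)
        then show ?thesis using in_hole by simp
      next
        case (in_ctx E')
        then have "X = ssubc 0 (mren_ctx Suc E') c \<or> rdcp X (ssubc 0 (mren_ctx Suc E') c)"
          using X ctxred_ssubc[of E E' c] by (auto dest: rtranclpD)
        moreover have "SN ctxred E'" using step.hyps(1) \<open>ctxred E E'\<close> by (rule SN_step)
        moreover have "ctx_depth E' = d" using ctx_depth_ctxred[OF \<open>ctxred E E'\<close>] step.prems by simp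
        ultimately show ?thesis
          using step.hyps(2)[OF tranclp.r_into_trancl[of ctxred, OF \<open>ctxred E E'\<close>]] IH_cmd in_ctx
          by blast
      qed
    next
      fix E0 F B assume E: "E = comp_ctx E0 F" and "frame F"
        and v: "v = fill E0 (Mu B (ssubc 0 (mren_ctx Suc F) c))"
      have "X = ssubc 0 (mren_ctx Suc E0) (ssubc 0 (mren_ctx Suc F) c)" using X E by (simp add: ssubc_ssubc)
      moreover have "ctx_depth E0 < d" using step.prems E ctx_depth_frame[OF \<open>frame F\<close>] by simp
      moreover have "SN ctxred E0" using step.hyps(1) E by (blast dest: SN_comp_ctx_left)
      ultimately show ?thesis using IH_depth v by blast
    qed
  qed
qed

lemma SN_fill_Mu: "SN rdc (ssubc 0 (mren_ctx Suc E) c) \<Longrightarrow> SN ctxred E \<Longrightarrow> SN rd (fill E (Mu A c))"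
proof -
  have "\<forall>E c A. X = ssubc 0 (mren_ctx Suc E) c \<longrightarrow> SN ctxred E \<longrightarrow> SN rd (fill E (Mu A c))"
    if "SN rdc X" for X
    using that
  proof (induct rule: SN_induct)
    case (step X)
    have "SN rd (fill E (Mu A c))"
      if "ctx_depth E = d" "X = ssubc 0 (mren_ctx Suc E) c" "SN ctxred E" for d E c A
      using that
    proof (induct d arbitrary: E c A rule: less_induct)
      case (less d)
      show ?case
        by (rule SN_fill_Mu_step[OF step.hyps(1) _ _ less.prems(3,1,2)])
          (use step.hyps(2) less.hyps in blast)+
    qed
    then show ?case by blast
  qed
  then show "SN rdc (ssubc 0 (mren_ctx Suc E) c) \<Longrightarrow> SN ctxred E \<Longrightarrow> SN rd (fill E (Mu A c))"
    by blast
qed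

section \<open>Reducibility\<close>

text \<open>Closure under mu-renaming is needed because
  the mu-variables of a term may be renamed by (mu i) steps.\<close>

fun Kont :: "ty \<Rightarrow> ctx set" where
  "Kont Nat = {E. \<forall>n. SN rd (fill E (num n))}"
| "Kont (Arr S T) = {comp_ctx E (CApp Hole s) | E s.
     E \<in> Kont T \<and> (\<forall>f E'. E' \<in> Kont S \<longrightarrow> SN rd (fill E' (mren f s)))}"

definition Red :: "ty \<Rightarrow> trm set" where
  "Red T = {t. \<forall>f E. E \<in> Kont T \<longrightarrow> SN rd (fill E (mren f t))}"

lemma Kont_Arr: "Kont (Arr S T) = {comp_ctx E (CApp Hole s) | E s. E \<in> Kont T \<and> s \<in> Red S}"
  by (simp add: Red_def)

declare Kont.simps(2) [simp del]

lemma RedI: "(\<And>f E. E \<in> Kont T \<Longrightarrow> SN rd (fill E (mren f t))) \<Longrightarrow> t \<in> Red T"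
  by (simp add: Red_def)

lemma RedD: "t \<in> Red T \<Longrightarrow> E \<in> Kont T \<Longrightarrow> SN rd (fill E t)"
  unfolding Red_def using mren_ident(1) by (metis (no_types, lifting) mem_Collect_eq)

lemma Red_mren: "t \<in> Red T \<Longrightarrow> mren g t \<in> Red T"
  by (simp add: Red_def)

lemma Kont_mren: "E \<in> Kont T \<Longrightarrow> mren_ctx f E \<in> Kont T"
proof (induct T arbitrary: E)
  case Nat
  then show ?case using SN_mren[of "fill E (num _)" f] by simp
next
  case (Arr S T)
  then obtain E0 s where "E = comp_ctx E0 (CApp Hole s)" "E0 \<in> Kont T" "s \<in> Red S"
    by (auto simp: Kont_Arr)
  moreover from this have "mren_ctx f E = comp_ctx (mren_ctx f E0) (CApp Hole (mren f s))" by simp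
  ultimately show ?case using Arr.hyps(2) Red_mren unfolding Kont_Arr by blast
qed

lemma candidate_properties:
  "(\<forall>E \<in> Kont T. SN ctxred E) \<and> Kont T \<noteq> {} \<and> (\<forall>t \<in> Red T. SN rd t) \<and> (\<forall>x. Var x \<in> Red T)"
proof (induct T)
  case Nat
  have Kont_SN: "\<forall>E \<in> Kont Nat. SN ctxred E" using SN_subterms(2) by auto
  moreover have "Hole \<in> Kont Nat" using SN_num by simp
  moreover from this have "\<forall>t \<in> Red Nat. SN rd t" using RedD by fastforce
  moreover have "\<forall>x. Var x \<in> Red Nat" using Kont_SN by (auto intro!: RedI SN_fill_Var)
  ultimately show ?case by blast
next
  case (Arr S T)
  then have Kont_SN: "\<forall>E \<in> Kont (Arr S T). SN ctxred E"
    by (auto simp: Kont_Arr intro!: SN_comp_ctx SN_ctx_arg)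
  obtain E0 where "E0 \<in> Kont T" using Arr.hyps(2) by blast
  moreover have "Var 0 \<in> Red S" using Arr.hyps(1) by blast
  ultimately have E: "comp_ctx E0 (CApp Hole (Var 0)) \<in> Kont (Arr S T)" by (auto simp: Kont_Arr)
  then have "Kont (Arr S T) \<noteq> {}" by blast
  moreover have "\<forall>t \<in> Red (Arr S T). SN rd t"
  proof
    fix t assume "t \<in> Red (Arr S T)"
    then have "SN rd (fill (comp_ctx E0 (CApp Hole (Var 0))) t)" using RedD E by blast
    then show "SN rd t" by (auto dest: SN_subterms(1,3))
  qed
  moreover have "\<forall>x. Var x \<in> Red (Arr S T)" using Kont_SN by (auto intro!: RedI SN_fill_Var)
  ultimately show ?case using Kont_SN by blast
qed

lemma Red_SN: "t \<in> Red T \<Longrightarrow> SN rd t"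
  using candidate_properties by blast

lemma Kont_SN: "E \<in> Kont T \<Longrightarrow> SN ctxred E"
  using candidate_properties by blast

lemma Kont_nonempty: "\<exists>E. E \<in> Kont T"
  using candidate_properties by blast

lemma Var_Red: "Var x \<in> Red T"
  using candidate_properties by blast

lemma App_Red: "t \<in> Red (Arr S T) \<Longrightarrow> u \<in> Red S \<Longrightarrow> App t u \<in> Red T"
proof (rule RedI)
  fix f E assume t: "t \<in> Red (Arr S T)" and u: "u \<in> Red S" and E: "E \<in> Kont T"
  have "comp_ctx E (CApp Hole (mren f u)) \<in> Kont (Arr S T)" using E Red_mren[OF u] by (auto simp: Kont_Arr)
  then have "SN rd (fill (comp_ctx E (CApp Hole (mren f u))) (mren f t))" using RedD[OF Red_mren[OF t]] by blast
  then show "SN rd (fill E (mren f (App t u)))" by simp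
qed

lemma Lam_Red:
  assumes "\<And>f s. s \<in> Red S \<Longrightarrow> subst0 (mren f b) s \<in> Red T"
  shows "Lam A b \<in> Red (Arr S T)"
proof (rule RedI)
  fix f E assume "E \<in> Kont (Arr S T)"
  then obtain E0 s where E: "E = comp_ctx E0 (CApp Hole s)" and "E0 \<in> Kont T" and "s \<in> Red S"
    by (auto simp: Kont_Arr)
  then have "SN rd (fill E0 (App (Lam A (mren f b)) s))"
    using SN_fill_beta Red_SN RedD assms by blast
  then show "SN rd (fill E (mren f (Lam A b)))" using E by simp
qed

lemma num_Red: "num n \<in> Red Nat"
  by (rule RedI) simp

lemma Sc_Red: "t \<in> Red Nat \<Longrightarrow> Sc t \<in> Red Nat"
proof (rule RedI)
  fix f E assume t: "t \<in> Red Nat" and E: "E \<in> Kont Nat"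
  then have "comp_ctx E (CSc Hole) \<in> Kont Nat" by simp (metis num.simps(2))
  then have "SN rd (fill (comp_ctx E (CSc Hole)) (mren f t))" using RedD[OF Red_mren[OF t]] by blast
  then show "SN rd (fill E (mren f (Sc t)))" by simp
qed

text \<open>Recursion on a numeral is reducible, by induction on the numeral; this makes
  the continuation \<open>nrec r s \<box>\<close> a continuation of type \<open>Nat\<close>.\<close>

lemma Nrec_num_Red:
  "r \<in> Red T \<Longrightarrow> s \<in> Red (Arr Nat (Arr T T)) \<Longrightarrow> Nrec A r s (num n) \<in> Red T"
proof (induct n arbitrary: r s)
  case 0
  show ?case
  proof (rule RedI)
    fix f E assume "E \<in> Kont T"
    then have "SN rd (fill E (Nrec A (mren f r) (mren f s) Zero))"
      using 0 by (intro SN_fill_zero Red_SN RedD Red_mren)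
    then show "SN rd (fill E (mren f (Nrec A r s (num 0))))" by simp
  qed
next
  case (Suc n)
  show ?case
  proof (rule RedI)
    fix f E assume E: "E \<in> Kont T"
    have r: "mren f r \<in> Red T" and s: "mren f s \<in> Red (Arr Nat (Arr T T))"
      using Suc.prems Red_mren by auto
    have "App (App (mren f s) (num n)) (Nrec A (mren f r) (mren f s) (num n)) \<in> Red T"
      by (rule App_Red[OF App_Red[OF s num_Red] Suc.hyps[OF r s]])
    then have "SN rd (fill E (Nrec A (mren f r) (mren f s) (Sc (num n))))"
      using E by (intro SN_fill_suc RedD)
    then show "SN rd (fill E (mren f (Nrec A r s (num (Suc n)))))" by simp
  qed
qed

lemma Nrec_Red:
  "r \<in> Red T \<Longrightarrow> s \<in> Red (Arr Nat (Arr T T)) \<Longrightarrow> t \<in> Red Nat \<Longrightarrow> Nrec A r s t \<in> Red T"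
proof (rule RedI)
  fix f E assume r: "r \<in> Red T" and s: "s \<in> Red (Arr Nat (Arr T T))" and t: "t \<in> Red Nat"
    and E: "E \<in> Kont T"
  have "comp_ctx E (CNrec A (mren f r) (mren f s) Hole) \<in> Kont Nat"
    using RedD[OF Nrec_num_Red[OF Red_mren[OF r] Red_mren[OF s]] E] by simp
  then have "SN rd (fill (comp_ctx E (CNrec A (mren f r) (mren f s) Hole)) (mren f t))"
    using RedD[OF Red_mren[OF t]] by blast
  then show "SN rd (fill E (mren f (Nrec A r s t)))" by simp
qed

lemma Mu_Red:
  assumes "\<And>f E. E \<in> Kont T \<Longrightarrow> SN rdc (ssubc 0 (mren_ctx Suc E) (mrenc (ext f) c))"
  shows "Mu A c \<in> Red T"
proof (rule RedI)
  fix f E assume "E \<in> Kont T"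
  then have "SN rd (fill E (Mu A (mrenc (ext f) c)))"
    using assms Kont_SN by (intro SN_fill_Mu)
  then show "SN rd (fill E (mren f (Mu A c)))" by simp
qed

section \<open>Adequacy\<close>

definition valid_sub :: "(nat \<Rightarrow> ty) \<Rightarrow> (nat \<Rightarrow> ty) \<Rightarrow> (nat \<Rightarrow> trm) \<Rightarrow> (nat \<Rightarrow> nat \<times> ctx) \<Rightarrow> bool" where
  "valid_sub \<Gamma> \<Delta> \<sigma> \<theta> \<longleftrightarrow> (\<forall>x. \<sigma> x \<in> Red (\<Gamma> x)) \<and> (\<forall>b. snd (\<theta> b) \<in> Kont (\<Delta> b))"

definition scons :: "trm \<Rightarrow> (nat \<Rightarrow> trm) \<Rightarrow> nat \<Rightarrow> trm" where
  "scons s \<sigma> i = (case i of 0 \<Rightarrow> s | Suc j \<Rightarrow> \<sigma> j)"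

lemma subst0_gsub_Lam_body:
  "subst0 (mren f (gsub (lift_lsub \<sigma>) (msub_lren Suc \<theta>) t)) s
   = gsub (scons s (\<lambda>x. mren f (\<sigma> x))) (msub_mren f \<theta>) t"
proof -
  have "(\<lambda>a. gsub (lsub0 s) msub_id (mren f (lift_lsub \<sigma> a))) = scons s (\<lambda>x. mren f (\<sigma> x))"
  proof
    show "gsub (lsub0 s) msub_id (mren f (lift_lsub \<sigma> i)) = scons s (\<lambda>x. mren f (\<sigma> x)) i" for i
      by (cases i) (simp_all add: scons_def lren_mren[symmetric] gsub_lren)
  qed
  moreover have "msub_comp (lsub0 s) msub_id (msub_mren f (msub_lren Suc \<theta>)) = msub_mren f \<theta>"
    by (rule ext) (simp add: prod_eq_iff lren_mren_ctx[symmetric] gsub_ctx_lren)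
  ultimately show ?thesis by (simp only: subst0_as_gsub mren_gsub gsub_gsub)
qed

lemma valid_sub_Lam:
  "valid_sub \<Gamma> \<Delta> \<sigma> \<theta> \<Longrightarrow> s \<in> Red S \<Longrightarrow>
   valid_sub (cons_env S \<Gamma>) \<Delta> (scons s (\<lambda>x. mren f (\<sigma> x))) (msub_mren f \<theta>)"
  unfolding valid_sub_def
  by (auto simp: scons_def cons_env_def Red_mren Kont_mren split: nat.split)

definition msub_cons :: "ctx \<Rightarrow> (nat \<Rightarrow> nat \<times> ctx) \<Rightarrow> nat \<Rightarrow> nat \<times> ctx" where
  "msub_cons E \<theta> b = (case b of 0 \<Rightarrow> (0, E) | Suc j \<Rightarrow> (Suc (fst (\<theta> j)), mren_ctx Suc (snd (\<theta> j))))"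

lemma ssubc_gsub_Mu_body:
  "ssubc 0 (mren_ctx Suc E) (mrenc (ext f) (gsubc (\<lambda>i. mren Suc (\<sigma> i)) (lift_msub \<theta>) c))
   = gsubc (\<lambda>x. mren Suc (mren f (\<sigma> x))) (msub_cons (mren_ctx Suc E) (msub_mren f \<theta>)) c"
proof -
  let ?ss = "msub_struct 0 (mren_ctx Suc E)" and ?rn = "msub_ren (ext f)"
  have "(\<lambda>a. gsub Var ?ss (gsub Var ?rn (mren Suc (\<sigma> a)))) = (\<lambda>x. mren Suc (mren f (\<sigma> x)))"
    by (simp add: mren_as_gsub(1)[symmetric])
  moreover have "msub_comp Var ?ss (msub_comp Var ?rn (lift_msub \<theta>)) = msub_cons (mren_ctx Suc E) (msub_mren f \<theta>)"
  proof
    show "msub_comp Var ?ss (msub_comp Var ?rn (lift_msub \<theta>)) b = msub_cons (mren_ctx Suc E) (msub_mren f \<theta>) b" for b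
      by (cases b) (simp_all add: prod_eq_iff msub_cons_def mren_ctx_as_gsub[symmetric])
  qed
  ultimately show ?thesis by (simp only: ssub_as_gsub mren_as_gsub(2) gsub_gsub)
qed

lemma valid_sub_Mu:
  "valid_sub \<Gamma> \<Delta> \<sigma> \<theta> \<Longrightarrow> E \<in> Kont R \<Longrightarrow>
   valid_sub \<Gamma> (cons_env R \<Delta>) (\<lambda>x. mren Suc (mren f (\<sigma> x))) (msub_cons (mren_ctx Suc E) (msub_mren f \<theta>))"
  unfolding valid_sub_def
  by (auto simp: msub_cons_def cons_env_def Red_mren Kont_mren split: nat.split)

lemma adequacy:
  "typed \<Gamma> \<Delta> t T \<Longrightarrow> valid_sub \<Gamma> \<Delta> \<sigma> \<theta> \<Longrightarrow> gsub \<sigma> \<theta> t \<in> Red T"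
  "typedc \<Gamma> \<Delta> c \<Longrightarrow> valid_sub \<Gamma> \<Delta> \<sigma> \<theta> \<Longrightarrow> SN rdc (gsubc \<sigma> \<theta> c)"
proof (induct arbitrary: \<sigma> \<theta> and \<sigma> \<theta> rule: typed_typedc.inducts)
  case (T_Var \<Gamma> \<Delta> x)
  then show ?case by (simp add: valid_sub_def)
next
  case (T_Lam S \<Gamma> \<Delta> t T)
  then show ?case by (auto intro!: Lam_Red simp: subst0_gsub_Lam_body valid_sub_Lam)
next
  case (T_App \<Gamma> \<Delta> t S T s)
  then show ?case by (simp add: App_Red[of _ S])
next
  case (T_Zero \<Gamma> \<Delta>)
  then show ?case using num_Red[of 0] by simp
next
  case (T_Sc \<Gamma> \<Delta> t)
  then show ?case by (simp add: Sc_Red)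
next
  case (T_Nrec \<Gamma> \<Delta> r R s t)
  then show ?case by (simp add: Nrec_Red)
next
  case (T_Mu \<Gamma> R \<Delta> c)
  show ?case unfolding gsub.simps
  proof (rule Mu_Red)
    fix f E assume "E \<in> Kont R"
    with T_Mu.prems have "valid_sub \<Gamma> (cons_env R \<Delta>) (\<lambda>x. mren Suc (mren f (\<sigma> x)))
        (msub_cons (mren_ctx Suc E) (msub_mren f \<theta>))"
      by (rule valid_sub_Mu)
    then show "SN rdc (ssubc 0 (mren_ctx Suc E) (mrenc (ext f) (gsubc (\<lambda>i. mren Suc (\<sigma> i)) (lift_msub \<theta>) c)))"
      unfolding ssubc_gsub_Mu_body by (rule T_Mu.hyps(2))
  qed
next
  case (T_Pass \<Gamma> \<Delta> t a)
  have "gsub \<sigma> \<theta> t \<in> Red (\<Delta> a)" using T_Pass by blast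
  moreover have "snd (\<theta> a) \<in> Kont (\<Delta> a)" using T_Pass.prems by (simp add: valid_sub_def)
  ultimately have "SN rd (fill (snd (\<theta> a)) (gsub \<sigma> \<theta> t))" by (rule RedD)
  then show ?case by (simp add: SN_Pass)
qed

text \<open>Every well-typed term is strongly normalising for \<open>rd\<close>: instantiate
  adequacy with the identity lambda-substitution and any continuations.\<close>

theorem SN_typed: "typed \<Gamma> \<Delta> t \<rho> \<Longrightarrow> SN rd t"
proof -
  assume "typed \<Gamma> \<Delta> t \<rho>"
  moreover have "valid_sub \<Gamma> \<Delta> Var (\<lambda>b. (b, SOME E. E \<in> Kont (\<Delta> b)))"
    unfolding valid_sub_def using Var_Red Kont_nonempty by (auto intro: someI_ex)
  ultimately have "gsub Var (\<lambda>b. (b, SOME E. E \<in> Kont (\<Delta> b))) t \<in> Red \<rho>" by (rule adequacy(1))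
  then show "SN rd t" by (auto dest: Red_SN SN_gsub_back)
qed

theorem mainTheorem13:
  assumes "typed \<Gamma> \<Delta> t \<rho>"
  shows "\<not> (\<exists>f. f 0 = t \<and> (\<forall>i. red (f i) (f (Suc i))))"
proof -
  have "SN rd t" using assms by (rule SN_typed)
  then have "SN red t" by (rule SN_simulation1) (rule red_rd)
  then show ?thesis by (rule SN_no_chain)
qed

end
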